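(* In the setting of the context, suppose that $m$, the order of $\sigma$, is prime. Then for every nonzero integer $k$, $\tilde{\mathfrak g}_{k\delta}=\pi_k(\mathfrak h)\otimes t^k$. Furthermore, if $\mathfrak g$ is a finite-dimensional simple Lie algebra, then $\tilde{\mathfrak g}_{k\delta}\subseteq\tilde{\mathfrak g}_c$.
   Context: All Lie algebras are over $\mathbb C$. An extended affine Lie algebra (EALA) is a triple $(\mathfrak g,(\cdot,\cdot),\mathfrak h)$ where $\mathfrak g$ is a Lie algebra, $\mathfrak h$ a subalgebra and $(\cdot,\cdot)$ a bilinear form such that: the form is symmetric, non-degenerate, invariant; $\mathfrak h$ is finite-dimensional and $\mathfrak g=\bigoplus_{\alpha\in\mathfrak h^*}\mathfrak g_\alpha$, $\mathfrak g_\alpha=\{x:[h,x]=\alpha(h)x\ \forall h\in\mathfrak h\}$, $\mathfrak g_0=\mathfrak h$; with root system $R=\{\alpha:\mathfrak g_\alpha\ne0\}$, $t_\alpha\in\mathfrak h$ given by $\alpha(h)=(h,t_\alpha)$, $(\alpha,\beta)=(t_\alpha,t_\beta)$, $R^\times=\{\alpha\in R:(\alpha,\alpha)\ne0\}$, $R^0=R\setminus R^\times$: $\mathrm{ad}\,x$ locally nilpotent for $x\in\mathfrak g_\alpha$, $\alpha\in R^\times$; $R$ discrete; $R^\times$ connected and isotropic roots non-isolated. Root systems are assumed reduced. A finite-dimensional simple Lie algebra with a Cartan subalgebra and (a multiple of) its Killing form is an EALA of this kind. The core of an EALA is the subalgebra generated by its non-isotropic root spaces. Setting: $(\mathfrak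 g,(\cdot,\cdot),\mathfrak h)$ is an EALA with root system $R$; $\sigma$ is an automorphism of $\mathfrak g$ with $\sigma^m=\mathrm{id}$, $\sigma(\mathfrak h)=\mathfrak h$, $(\sigma x,\sigma y)=(x,y)$, and $C_{\mathfrak g^\sigma}(\mathfrak h^\sigma)=\mathfrak h^\sigma$ ($\mathfrak g^\sigma,\mathfrak h^\sigma$ fixed points, $C$ centralizer). $\sigma$ acts on $\mathfrak h^*$ by $\sigma(\alpha)(h)=\alpha(\sigma^{-1}h)$. Let $\omega$ be a primitive $m$-th root of unity, $\mathfrak g^{\bar i}=\{x:\sigma(x)=\omega^ix\}$, $\pi_j=\frac1m\sum_{i=0}^{m-1}\omega^{-ij}\sigma^i$ (indices mod $m$), $\pi=\pi_0$. Assume some $\alpha\in R^\times$ has $(\pi(\alpha),\pi(\alpha))\ne0$. The affinization $\tilde{\mathfrak g}=\bigoplus_{i\in\mathbb Z}(\mathfrak g^{\bar i}\otimes t^i)\oplus\mathbb Cc\oplus\mathbb Cd$ has bracket $[x\otimes t^n+rc+sd,\,y\otimes t^{n'}+r'c+s'd]=[x,y]\otimes t^{n+n'}+n\delta_{n+n',0}(x,y)c+sn'\,y\otimes t^{n'}-s'n\,x\otimes t^n$ and form $(x\otimes t^n+rc+sd,\,y\otimes t^{n'}+r'c+s'd)=\delta_{n+n',0}(x,y)+rs'+r's$; with $\tilde{\mathfrak h}=\mathfrak h^\sigma\oplus\mathbb Cc\oplus\mathbb Cd$, it is an EALA (a known fact) with root spaces $\tilde{\mathfrak g}_{\tilde\alpha}$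 ($\tilde\alpha\in\tilde{\mathfrak h}^*$) and core $\tilde{\mathfrak g}_c$. $\delta\in\tilde{\mathfrak h}^*$ vanishes on $\mathfrak h^\sigma\oplus\mathbb Cc$ with $\delta(d)=1$. *)

theory Defs
  imports "HOL-Analysis.Analysis"
begin

text \<open>A complex Lie algebra is modelled on the whole carrier of a type 'a
(an abelian group) with an explicit complex scalar multiplication sc and bracket br.\<close>

definition lie_algebra :: "(complex \<Rightarrow> 'a::ab_group_add \<Rightarrow> 'a) \<Rightarrow> ('a \<Rightarrow> 'a \<Rightarrow> 'a) \<Rightarrow> bool" where
  "lie_algebra sc br \<longleftrightarrow> vector_space sc
     \<and> (\<forall>x y z. br (x + y) z = br x z + br y z)
     \<and> (\<forall>c x y. br (sc c x) y = sc c (br x y))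
     \<and> (\<forall>x. br x x = 0)
     \<and> (\<forall>x y z. br x (br y z) + br y (br z x) + br z (br x y) = 0)"

definition subalgebra :: "(complex \<Rightarrow> 'a::ab_group_add \<Rightarrow> 'a) \<Rightarrow> ('a \<Rightarrow> 'a \<Rightarrow> 'a) \<Rightarrow> 'a set \<Rightarrow> bool" where
  "subalgebra sc br A \<longleftrightarrow> module.subspace sc A \<and> (\<forall>x\<in>A. \<forall>y\<in>A. br x y \<in> A)"

definition lie_ideal :: "(complex \<Rightarrow> 'a::ab_group_add \<Rightarrow> 'a) \<Rightarrow> ('a \<Rightarrow> 'a \<Rightarrow> 'a) \<Rightarrow> 'a set \<Rightarrow> bool" where
  "lie_ideal sc br I \<longleftrightarrow> module.subspace sc I \<and> (\<forall>x\<in>I. \<forall>y. br x y \<in> I)"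

definition fin_dim_subspace :: "(complex \<Rightarrow> 'a::ab_group_add \<Rightarrow> 'a) \<Rightarrow> 'a set \<Rightarrow> bool" where
  "fin_dim_subspace sc A \<longleftrightarrow> (\<exists>S. finite S \<and> S \<subseteq> A \<and> module.span sc S = A)"

definition fd_simple :: "(complex \<Rightarrow> 'a::ab_group_add \<Rightarrow> 'a) \<Rightarrow> ('a \<Rightarrow> 'a \<Rightarrow> 'a) \<Rightarrow> bool" where
  "fd_simple sc br \<longleftrightarrow> lie_algebra sc br \<and> fin_dim_subspace sc UNIV
     \<and> (\<exists>x y. br x y \<noteq> 0)
     \<and> (\<forall>I. lie_ideal sc br I \<longrightarrow> I = {0} \<or> I = UNIV)"

text \<open>The dual space of H: functionals linear on H, extended by zero outside H.\<close>
definition hdual :: "(complex \<Rightarrow> 'a::ab_group_add \<Rightarrow> 'a) \<Rightarrow> 'a set \<Rightarrow> ('a \<Rightarrow> complex) set" where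
  "hdual sc H = {\<alpha>. (\<forall>x\<in>H. \<forall>y\<in>H. \<alpha> (x + y) = \<alpha> x + \<alpha> y)
                   \<and> (\<forall>c. \<forall>x\<in>H. \<alpha> (sc c x) = c * \<alpha> x)
                   \<and> (\<forall>x. x \<notin> H \<longrightarrow> \<alpha> x = 0)}"

definition rootsp :: "(complex \<Rightarrow> 'a \<Rightarrow> 'a) \<Rightarrow> ('a \<Rightarrow> 'a \<Rightarrow> 'a) \<Rightarrow> 'a set \<Rightarrow> ('a \<Rightarrow> complex) \<Rightarrow> 'a set" where
  "rootsp sc br H \<alpha> = {x. \<forall>h\<in>H. br h x = sc (\<alpha> h) x}"

definition roots :: "(complex \<Rightarrow> 'a::ab_group_add \<Rightarrow> 'a) \<Rightarrow> ('a \<Rightarrow> 'a \<Rightarrow> 'a) \<Rightarrow> 'a set \<Rightarrow> ('a \<Rightarrow> complex) set" where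
  "roots sc br H = {\<alpha> \<in> hdual sc H. rootsp sc br H \<alpha> \<noteq> {0}}"

definition tvec :: "('a \<Rightarrow> 'a \<Rightarrow> complex) \<Rightarrow> 'a set \<Rightarrow> ('a \<Rightarrow> complex) \<Rightarrow> 'a" where
  "tvec B H \<alpha> = (THE t. t \<in> H \<and> (\<forall>h\<in>H. \<alpha> h = B h t))"

definition dform :: "('a \<Rightarrow> 'a \<Rightarrow> complex) \<Rightarrow> 'a set \<Rightarrow> ('a \<Rightarrow> complex) \<Rightarrow> ('a \<Rightarrow> complex) \<Rightarrow> complex" where
  "dform B H \<alpha> \<beta> = B (tvec B H \<alpha>) (tvec B H \<beta>)"

definition nonisotropic_roots :: "(complex \<Rightarrow> 'a::ab_group_add \<Rightarrow> 'a) \<Rightarrow> ('a \<Rightarrow> 'a \<Rightarrow> 'a) \<Rightarrow> ('a \<Rightarrow> 'a \<Rightarrow> complex) \<Rightarrow> 'a set \<Rightarrow> ('a \<Rightarrow> complex) set" where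
  "nonisotropic_roots sc br B H = {\<alpha> \<in> roots sc br H. dform B H \<alpha> \<alpha> \<noteq> 0}"

definition isotropic_roots :: "(complex \<Rightarrow> 'a::ab_group_add \<Rightarrow> 'a) \<Rightarrow> ('a \<Rightarrow> 'a \<Rightarrow> 'a) \<Rightarrow> ('a \<Rightarrow> 'a \<Rightarrow> complex) \<Rightarrow> 'a set \<Rightarrow> ('a \<Rightarrow> complex) set" where
  "isotropic_roots sc br B H = roots sc br H - nonisotropic_roots sc br B H"

text \<open>The topology on H*
 is the product (pointwise) topology on functions, which on the finite-dimensional
 space H* (functions vanishing off H) is the usual vector space topology.\<close>
definition eala :: "(complex \<Rightarrow> 'a::ab_group_add \<Rightarrow> 'a) \<Rightarrow> ('a \<Rightarrow> 'a \<Rightarrow> 'a) \<Rightarrow> ('a \<Rightarrow> 'a \<Rightarrow> complex) \<Rightarrow> 'a set \<Rightarrow> bool" where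
  "eala sc br B H \<longleftrightarrow>
     lie_algebra sc br
     \<comment> \<open>symmetric, bilinear, non-degenerate, invariant form\<close>
     \<and> (\<forall>x y z. B (x + y) z = B x z + B y z)
     \<and> (\<forall>c x y. B (sc c x) y = c * B x y)
     \<and> (\<forall>x y. B x y = B y x)
     \<and> (\<forall>x. (\<forall>y. B x y = 0) \<longrightarrow> x = 0)
     \<and> (\<forall>x y z. B (br x y) z = B x (br y z))
     \<comment> \<open>H finite-dimensional subalgebra, root space decomposition, g_0 = H\<close>
     \<and> subalgebra sc br H \<and> fin_dim_subspace sc H
     \<and> module.span sc (\<Union>\<alpha>\<in>hdual sc H. rootsp sc br H \<alpha>) = UNIV
     \<and> rootsp sc br H (\<lambda>_. 0) = H
     \<comment> \<open>ad x locally nilpotent for x in a non-isotropic root space\<close>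
     \<and> (\<forall>\<alpha>\<in>nonisotropic_roots sc br B H. \<forall>x\<in>rootsp sc br H \<alpha>. \<forall>y. \<exists>n. (br x ^^ n) y = 0)
     \<comment> \<open>R discrete\<close>
     \<and> (\<forall>\<alpha>\<in>roots sc br H. \<exists>U. open U \<and> U \<inter> roots sc br H = {\<alpha>})
     \<comment> \<open>R^x connected (indecomposable)\<close>
     \<and> (\<forall>P Q. P \<union> Q = nonisotropic_roots sc br B H \<and> (\<forall>\<alpha>\<in>P. \<forall>\<beta>\<in>Q. dform B H \<alpha> \<beta> = 0)
              \<longrightarrow> P = {} \<or> Q = {})
     \<comment> \<open>isotropic roots non-isolated\<close>
     \<and> (\<forall>\<delta>\<in>isotropic_roots sc br B H. \<exists>\<alpha>\<in>nonisotropic_roots sc br B H.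
            (\<lambda>h. \<alpha> h + \<delta> h) \<in> roots sc br H)
     \<comment> \<open>reduced\<close>
     \<and> (\<forall>\<alpha>\<in>nonisotropic_roots sc br B H. (\<lambda>h. 2 * \<alpha> h) \<notin> roots sc br H)"

definition fixed_pts :: "('a \<Rightarrow> 'a) \<Rightarrow> 'a set" where
  "fixed_pts \<sigma> = {x. \<sigma> x = x}"

definition admissible_aut :: "(complex \<Rightarrow> 'a::ab_group_add \<Rightarrow> 'a) \<Rightarrow> ('a \<Rightarrow> 'a \<Rightarrow> 'a) \<Rightarrow> ('a \<Rightarrow> 'a \<Rightarrow> complex) \<Rightarrow> 'a set \<Rightarrow> ('a \<Rightarrow> 'a) \<Rightarrow> nat \<Rightarrow> bool" where
  "admissible_aut sc br B H \<sigma> m \<longleftrightarrow>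
     bij \<sigma>
     \<and> (\<forall>x y. \<sigma> (x + y) = \<sigma> x + \<sigma> y)
     \<and> (\<forall>c x. \<sigma> (sc c x) = sc c (\<sigma> x))
     \<and> (\<forall>x y. \<sigma> (br x y) = br (\<sigma> x) (\<sigma> y))
     \<and> (\<sigma> ^^ m) = id
     \<and> \<sigma> ` H = H
     \<and> (\<forall>x y. B (\<sigma> x) (\<sigma> y) = B x y)
     \<and> {x \<in> fixed_pts \<sigma>. \<forall>h\<in>H \<inter> fixed_pts \<sigma>. br h x = 0} = H \<inter> fixed_pts \<sigma>"

definition primitive_root :: "complex \<Rightarrow> nat \<Rightarrow> bool" where
  "primitive_root \<omega> m \<longleftrightarrow> \<omega> ^ m = 1 \<and> (\<forall>j. 0 < j \<and> j < m \<longrightarrow> \<omega> ^ j \<noteq> 1)"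

definition dual_act :: "('a \<Rightarrow> 'a) \<Rightarrow> nat \<Rightarrow> ('a \<Rightarrow> complex) \<Rightarrow> ('a \<Rightarrow> complex)" where
  "dual_act \<sigma> i \<alpha> = (\<lambda>h. \<alpha> ((inv \<sigma> ^^ i) h))"

definition pi_dual :: "('a \<Rightarrow> 'a) \<Rightarrow> nat \<Rightarrow> ('a \<Rightarrow> complex) \<Rightarrow> ('a \<Rightarrow> complex)" where
  "pi_dual \<sigma> m \<alpha> = (\<lambda>h. (1 / of_nat m) * (\<Sum>i<m. dual_act \<sigma> i \<alpha> h))"

text \<open>pi_j on g (index j an integer; only j mod m matters).\<close>
definition pi_k :: "(complex \<Rightarrow> 'a::ab_group_add \<Rightarrow> 'a) \<Rightarrow> ('a \<Rightarrow> 'a) \<Rightarrow> nat \<Rightarrow> complex \<Rightarrow> int \<Rightarrow> 'a \<Rightarrow> 'a" where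
  "pi_k sc \<sigma> m \<omega> j x = sc (1 / of_nat m) (\<Sum>i<m. sc (\<omega> powi (- (int i * j))) ((\<sigma> ^^ i) x))"

definition eigsp :: "(complex \<Rightarrow> 'a \<Rightarrow> 'a) \<Rightarrow> ('a \<Rightarrow> 'a) \<Rightarrow> complex \<Rightarrow> int \<Rightarrow> 'a set" where
  "eigsp sc \<sigma> \<omega> i = {x. \<sigma> x = sc (\<omega> powi i) x}"

text \<open>An element  sum_n f(n) (x) t^n + r c + s d  is represented by the triple (f, r, s),
 with f finitely supported and f(n) in g^{n mod m}.\<close>
type_synonym 'a aff = "(int \<Rightarrow> 'a) \<times> complex \<times> complex"

definition aff_carrier :: "(complex \<Rightarrow> 'a::ab_group_add \<Rightarrow> 'a) \<Rightarrow> ('a \<Rightarrow> 'a) \<Rightarrow> complex \<Rightarrow> 'a aff set" where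
  "aff_carrier sc \<sigma> \<omega> = {(f, r, s). finite {n. f n \<noteq> 0} \<and> (\<forall>n. f n \<in> eigsp sc \<sigma> \<omega> n)}"

definition aff_zero :: "'a::ab_group_add aff" where
  "aff_zero = (\<lambda>_. 0, 0, 0)"

definition aff_add :: "'a::ab_group_add aff \<Rightarrow> 'a aff \<Rightarrow> 'a aff" where
  "aff_add X Y = (case X of (f, r, s) \<Rightarrow> case Y of (f', r', s') \<Rightarrow> (\<lambda>n. f n + f' n, r + r', s + s'))"

definition aff_scale :: "(complex \<Rightarrow> 'a \<Rightarrow> 'a) \<Rightarrow> complex \<Rightarrow> 'a aff \<Rightarrow> 'a aff" where
  "aff_scale sc a X = (case X of (f, r, s) \<Rightarrow> (\<lambda>n. sc a (f n), a * r, a * s))"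

text \<open>[x t^n + rc + sd, y t^n' + r'c + s'd]
  = [x,y] t^(n+n') + n delta_{n+n',0} (x,y) c + s n' y t^n' - s' n x t^n.\<close>
definition aff_br :: "(complex \<Rightarrow> 'a::ab_group_add \<Rightarrow> 'a) \<Rightarrow> ('a \<Rightarrow> 'a \<Rightarrow> 'a) \<Rightarrow> ('a \<Rightarrow> 'a \<Rightarrow> complex) \<Rightarrow> 'a aff \<Rightarrow> 'a aff \<Rightarrow> 'a aff" where
  "aff_br sc br B X Y = (case X of (f, r, s) \<Rightarrow> case Y of (f', r', s') \<Rightarrow>
     (\<lambda>n. (\<Sum>a\<in>{a. f a \<noteq> 0}. br (f a) (f' (n - a)))
          + sc (s * of_int n) (f' n) - sc (s' * of_int n) (f n),
      (\<Sum>a\<in>{a. f a \<noteq> 0}. of_int a * B (f a) (f' (- a))),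
      0))"

definition aff_form :: "('a::ab_group_add \<Rightarrow> 'a \<Rightarrow> complex) \<Rightarrow> 'a aff \<Rightarrow> 'a aff \<Rightarrow> complex" where
  "aff_form B X Y = (case X of (f, r, s) \<Rightarrow> case Y of (f', r', s') \<Rightarrow>
     (\<Sum>a\<in>{a. f a \<noteq> 0}. B (f a) (f' (- a))) + r * s' + r' * s)"

definition tens :: "int \<Rightarrow> 'a::zero \<Rightarrow> 'a aff" where
  "tens k x = (\<lambda>n. if n = k then x else 0, 0, 0)"

text \<open>The Cartan subalgebra  H~ = H^sigma + C c + C d.\<close>
definition aff_H :: "'a::ab_group_add set \<Rightarrow> ('a \<Rightarrow> 'a) \<Rightarrow> 'a aff set" where
  "aff_H H \<sigma> = {(f, r, s). f 0 \<in> H \<inter> fixed_pts \<sigma> \<and> (\<forall>n. n \<noteq> 0 \<longrightarrow> f n = 0)}"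

definition aff_hdual :: "(complex \<Rightarrow> 'a::ab_group_add \<Rightarrow> 'a) \<Rightarrow> 'a set \<Rightarrow> ('a \<Rightarrow> 'a) \<Rightarrow> ('a aff \<Rightarrow> complex) set" where
  "aff_hdual sc H \<sigma> = {\<phi>. (\<forall>X\<in>aff_H H \<sigma>. \<forall>Y\<in>aff_H H \<sigma>. \<phi> (aff_add X Y) = \<phi> X + \<phi> Y)
                   \<and> (\<forall>c. \<forall>X\<in>aff_H H \<sigma>. \<phi> (aff_scale sc c X) = c * \<phi> X)
                   \<and> (\<forall>X. X \<notin> aff_H H \<sigma> \<longrightarrow> \<phi> X = 0)}"

definition aff_rootsp :: "(complex \<Rightarrow> 'a::ab_group_add \<Rightarrow> 'a) \<Rightarrow> ('a \<Rightarrow> 'a \<Rightarrow> 'a) \<Rightarrow> ('a \<Rightarrow> 'a \<Rightarrow> complex)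
     \<Rightarrow> 'a set \<Rightarrow> ('a \<Rightarrow> 'a) \<Rightarrow> complex \<Rightarrow> ('a aff \<Rightarrow> complex) \<Rightarrow> 'a aff set" where
  "aff_rootsp sc br B H \<sigma> \<omega> \<phi> = {X \<in> aff_carrier sc \<sigma> \<omega>.
      \<forall>Z\<in>aff_H H \<sigma>. aff_br sc br B Z X = aff_scale sc (\<phi> Z) X}"

definition aff_roots :: "(complex \<Rightarrow> 'a::ab_group_add \<Rightarrow> 'a) \<Rightarrow> ('a \<Rightarrow> 'a \<Rightarrow> 'a) \<Rightarrow> ('a \<Rightarrow> 'a \<Rightarrow> complex)
     \<Rightarrow> 'a set \<Rightarrow> ('a \<Rightarrow> 'a) \<Rightarrow> complex \<Rightarrow> ('a aff \<Rightarrow> complex) set" where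
  "aff_roots sc br B H \<sigma> \<omega> = {\<phi> \<in> aff_hdual sc H \<sigma>. aff_rootsp sc br B H \<sigma> \<omega> \<phi> \<noteq> {aff_zero}}"

definition aff_tvec :: "('a::ab_group_add \<Rightarrow> 'a \<Rightarrow> complex) \<Rightarrow> 'a set \<Rightarrow> ('a \<Rightarrow> 'a) \<Rightarrow> ('a aff \<Rightarrow> complex) \<Rightarrow> 'a aff" where
  "aff_tvec B H \<sigma> \<phi> = (THE T. T \<in> aff_H H \<sigma> \<and> (\<forall>Z\<in>aff_H H \<sigma>. \<phi> Z = aff_form B Z T))"

definition aff_nonisotropic_roots :: "(complex \<Rightarrow> 'a::ab_group_add \<Rightarrow> 'a) \<Rightarrow> ('a \<Rightarrow> 'a \<Rightarrow> 'a) \<Rightarrow> ('a \<Rightarrow> 'a \<Rightarrow> complex)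
     \<Rightarrow> 'a set \<Rightarrow> ('a \<Rightarrow> 'a) \<Rightarrow> complex \<Rightarrow> ('a aff \<Rightarrow> complex) set" where
  "aff_nonisotropic_roots sc br B H \<sigma> \<omega> = {\<phi> \<in> aff_roots sc br B H \<sigma> \<omega>.
      aff_form B (aff_tvec B H \<sigma> \<phi>) (aff_tvec B H \<sigma> \<phi>) \<noteq> 0}"

definition aff_core :: "(complex \<Rightarrow> 'a::ab_group_add \<Rightarrow> 'a) \<Rightarrow> ('a \<Rightarrow> 'a \<Rightarrow> 'a) \<Rightarrow> ('a \<Rightarrow> 'a \<Rightarrow> complex)
     \<Rightarrow> 'a set \<Rightarrow> ('a \<Rightarrow> 'a) \<Rightarrow> complex \<Rightarrow> 'a aff set" where
  "aff_core sc br B H \<sigma> \<omega> = \<Inter> {A. A \<subseteq> aff_carrier sc \<sigma> \<omega> \<and> aff_zero \<in> A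
      \<and> (\<forall>X\<in>A. \<forall>Y\<in>A. aff_add X Y \<in> A)
      \<and> (\<forall>c. \<forall>X\<in>A. aff_scale sc c X \<in> A)
      \<and> (\<forall>X\<in>A. \<forall>Y\<in>A. aff_br sc br B X Y \<in> A)
      \<and> (\<Union>\<phi>\<in>aff_nonisotropic_roots sc br B H \<sigma> \<omega>. aff_rootsp sc br B H \<sigma> \<omega> \<phi>) \<subseteq> A}"

text \<open>k delta as a functional on H~: vanishes on H^sigma + C c, and delta(d) = 1.\<close>
definition kdelta :: "'a::ab_group_add set \<Rightarrow> ('a \<Rightarrow> 'a) \<Rightarrow> int \<Rightarrow> 'a aff \<Rightarrow> complex" where
  "kdelta H \<sigma> k X = (if X \<in> aff_H H \<sigma> then of_int k * snd (snd X) else 0)"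

end

theory Submission
  imports Defs "HOL-Library.Function_Algebras"
begin

text \<open>
  Testing a root vector for k\<delta> against d shows that it is homogeneous of degree k, and testing
  it against the \<sigma>-fixed part H^\<sigma> of H shows that its coefficient centralizes H^\<sigma>. That
  centralizer is H: since m is prime, a root \<alpha> of g vanishing on H^\<sigma> vanishes on H, for
  otherwise its m conjugates \<alpha> \<circ> \<sigma>^j are pairwise distinct and nonzero, while the sum of the
  conjugates of an \<alpha>-root vector lies in H, contradicting the independence of root spaces.

  For g finite-dimensional simple, the x with \<pi>_a(x) \<otimes> t^a in the core for all a \<noteq> 0 form a
  subalgebra, because \<pi>_k[x, y] is the sum of [\<pi>_a x, \<pi>_(k-a) y] over any m consecutive a,
  which can be chosen to avoid 0 and k. It contains every root space g_\<beta> with \<beta> \<noteq> 0: the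
  restriction of \<beta> to H^\<sigma> is nonzero, and pairing x = \<pi>_a(x_\<beta>) with a vector y of opposite
  weight in g^(-a) gives t = [x, y] / B(x, y) in H^\<sigma>, which represents \<beta> on H^\<sigma> and has
  B(t, t) \<noteq> 0 (otherwise [x, y] would be a nonzero ad-nilpotent element of H). So \<beta> + a\<delta> is
  a non-isotropic root of the affinization with root vector x \<otimes> t^a. A subalgebra of a simple
  Lie algebra that contains all root spaces for nonzero roots is everything.
\<close>

lemma primitive_root_neq_0: "primitive_root \<omega> m \<Longrightarrow> 0 < m \<Longrightarrow> \<omega> \<noteq> 0"
  unfolding primitive_root_def by (metis power_0_left zero_neq_one gr_implies_not0)

lemma primitive_root_powi_eq_1_iff:
  assumes "primitive_root \<omega> m" and "0 < m"
  shows "\<omega> powi d = 1 \<longleftrightarrow> int m dvd d"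
proof -
  have \<omega>m: "\<omega> ^ m = 1" and prim: "\<And>j. 0 < j \<Longrightarrow> j < m \<Longrightarrow> \<omega> ^ j \<noteq> 1"
    using assms(1) unfolding primitive_root_def by auto
  have "\<omega> \<noteq> 0"
    using primitive_root_neq_0[OF assms] .
  have split: "\<omega> powi (int m * q + r) = (\<omega> ^ m) powi q * \<omega> powi r" for q r
    using \<open>\<omega> \<noteq> 0\<close> by (simp add: power_int_add power_int_mult flip: power_int_of_nat)
  have "\<omega> powi d = \<omega> ^ nat (d mod int m)"
    using split[of "d div int m" "d mod int m"] \<omega>m assms(2) by (simp add: power_int_def)
  moreover have "nat (d mod int m) < m"
    using assms(2) by (simp add: nat_less_iff)
  moreover have "0 \<le> d mod int m"
    using assms(2) by simp
  ultimately show ?thesis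
    using prim[of "nat (d mod int m)"] by (auto simp: dvd_eq_mod_eq_0 le_less)
qed

lemma primitive_root_sum_powi_window:
  assumes "primitive_root \<omega> m" and "0 < m" and "\<not> int m dvd d"
  shows "(\<Sum>a\<in>{c..<c + int m}. \<omega> powi (a * d)) = 0"
proof -
  define z where "z = \<omega> powi d"
  have "\<omega> \<noteq> 0"
    using primitive_root_neq_0[OF assms(1,2)] .
  have "z \<noteq> 1"
    using primitive_root_powi_eq_1_iff[OF assms(1,2)] assms(3) by (simp add: z_def)
  moreover have "z ^ m = 1"
    using primitive_root_powi_eq_1_iff[OF assms(1,2), of "int m * d"]
    by (simp add: z_def power_int_mult mult.commute flip: power_int_of_nat)
  ultimately have geometric: "(\<Sum>t<m. z ^ t) = 0"
    by (simp add: geometric_sum)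
  have "(\<Sum>a\<in>{c..<c + int m}. \<omega> powi (a * d)) = (\<Sum>t<m. \<omega> powi ((c + int t) * d))"
    by (rule sum.reindex_bij_witness[of _ "\<lambda>t. c + int t" "\<lambda>a. nat (a - c)"]) auto
  also have "\<dots> = \<omega> powi (c * d) * (\<Sum>t<m. z ^ t)"
    using \<open>\<omega> \<noteq> 0\<close>
    by (simp add: sum_distrib_left distrib_right power_int_add z_def power_int_mult
        mult.commute[of "int _" d] flip: power_int_of_nat)
  finally show ?thesis
    using geometric by simp
qed

lemma sum_lessThan_Suc_periodic:
  fixes g :: "nat \<Rightarrow> 'b::cancel_comm_monoid_add"
  assumes "g n = g 0"
  shows "(\<Sum>i<n. g (Suc i)) = (\<Sum>i<n. g i)"
  using sum.lessThan_Suc_shift[of g n] assms by (simp add: add.commute)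

locale lie_algebra_form =
  fixes sc :: "complex \<Rightarrow> 'a::ab_group_add \<Rightarrow> 'a"
    and br :: "'a \<Rightarrow> 'a \<Rightarrow> 'a"
    and B :: "'a \<Rightarrow> 'a \<Rightarrow> complex"
  assumes lie: "lie_algebra sc br"
    and B_add1: "B (x + y) z = B x z + B y z"
    and B_sc1: "B (sc c x) y = c * B x y"
    and B_sym: "B x y = B y x"
    and B_nondeg: "(\<And>y. B x y = 0) \<Longrightarrow> x = 0"
    and B_inv: "B (br x y) z = B x (br y z)"

sublocale lie_algebra_form \<subseteq> vs: vector_space sc
  using lie unfolding lie_algebra_def by auto

context lie_algebra_form
begin

lemma br_add1: "br (x + y) z = br x z + br y z"
  and br_sc1: "br (sc c x) y = sc c (br x y)"
  and br_self: "br x x = 0"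
  and jacobi: "br x (br y z) + br y (br z x) + br z (br x y) = 0"
  using lie unfolding lie_algebra_def by auto

lemma B_add2: "B z (x + y) = B z x + B z y"
  using B_add1 B_sym by metis

lemma B_sc2: "B y (sc c x) = c * B y x"
  using B_sc1 B_sym by metis

lemma B_zero1 [simp]: "B 0 y = 0"
  using B_sc1[of 0 0 y] by simp

lemma B_zero2 [simp]: "B y 0 = 0"
  using B_sc2[of y 0 0] by simp

lemma B_minus1: "B (- x) y = - B x y"
  using B_add1[of x "- x" y] by (simp add: eq_neg_iff_add_eq_0 add.commute)

lemma B_diff2: "B y (x - z) = B y x - B y z"
  using B_add2[of y "x - z" z] by simp

lemma B_sum1: "B (sum f A) y = (\<Sum>a\<in>A. B (f a) y)"
  by (induct A rule: infinite_finite_induct) (auto simp: B_add1)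

lemma B_sum2: "B y (sum f A) = (\<Sum>a\<in>A. B y (f a))"
  by (simp add: B_sym[of y] B_sum1)

lemma eq_by_B: "(\<And>w. B w x = B w y) \<Longrightarrow> x = y"
  using B_nondeg[of "x - y"] by (simp add: B_sym[of "x - y"] B_diff2)

text \<open>The definition of a Lie algebra only asks for linearity in the first argument;
  linearity in the second one comes from the invariance and non-degeneracy of the form.\<close>

lemma br_add2: "br z (x + y) = br z x + br z y"
  by (rule eq_by_B) (simp add: B_inv[symmetric] B_add2)

lemma br_sc2: "br y (sc c x) = sc c (br y x)"
  by (rule eq_by_B) (simp add: B_inv[symmetric] B_sc2)

lemma br_zero2 [simp]: "br y 0 = 0"
  using br_add2[of y 0 0] by simp

lemma br_zero1 [simp]: "br 0 y = 0"
  using br_add1[of 0 0 y] by simp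

lemma br_anti: "br x y = - br y x"
proof -
  have "0 = br x x + br y x + (br x y + br y y)"
    using br_self[of "x + y"] by (simp only: br_add1 br_add2)
  then show ?thesis
    by (simp add: br_self eq_neg_iff_add_eq_0 add.commute)
qed

lemma br_scale_scale: "br (sc a u) (sc b v) = sc (a * b) (br u v)"
  by (simp add: br_sc1 br_sc2)

lemma br_minus2: "br y (- x) = - br y x"
  using br_add2[of y x "- x"] by (simp add: eq_neg_iff_add_eq_0 add.commute)

lemma br_diff2: "br y (x - z) = br y x - br y z"
  using br_add2[of y "x - z" z] by simp

lemma br_sum1: "br (sum f A) y = (\<Sum>a\<in>A. br (f a) y)"
  by (induct A rule: infinite_finite_induct) (auto simp: br_add1)

lemma br_sum2: "br y (sum f A) = (\<Sum>a\<in>A. br y (f a))"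
  by (induct A rule: infinite_finite_induct) (auto simp: br_add2)

lemma br_derivation: "br h (br x y) = br (br h x) y + br x (br h y)"
  using jacobi[of h x y] br_anti[of y h] br_anti[of y "br h x"]
  by (simp add: br_minus2 eq_neg_iff_add_eq_0 algebra_simps)

lemma rootsp_subspace: "vs.subspace (rootsp sc br S \<beta>)"
  unfolding vs.subspace_def rootsp_def
  by (auto simp: br_add2 br_sc2 vs.scale_right_distrib vs.scale_left_commute)

lemma rootsp_zero [simp]: "0 \<in> rootsp sc br S \<beta>"
  and rootsp_add: "x \<in> rootsp sc br S \<beta> \<Longrightarrow> y \<in> rootsp sc br S \<beta> \<Longrightarrow> x + y \<in> rootsp sc br S \<beta>"
  and rootsp_scale: "x \<in> rootsp sc br S \<beta> \<Longrightarrow> sc c x \<in> rootsp sc br S \<beta>"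
  and rootsp_sum: "(\<And>a. a \<in> A \<Longrightarrow> f a \<in> rootsp sc br S \<beta>) \<Longrightarrow> sum f A \<in> rootsp sc br S \<beta>"
  using rootsp_subspace vs.subspace_0 vs.subspace_add vs.subspace_scale vs.subspace_sum by blast+

lemma rootspD: "x \<in> rootsp sc br S \<beta> \<Longrightarrow> h \<in> S \<Longrightarrow> br h x = sc (\<beta> h) x"
  unfolding rootsp_def by auto

lemma rootspI: "(\<And>h. h \<in> S \<Longrightarrow> br h x = sc (\<beta> h) x) \<Longrightarrow> x \<in> rootsp sc br S \<beta>"
  unfolding rootsp_def by auto

lemma rootsp_mono: "x \<in> rootsp sc br S \<beta> \<Longrightarrow> T \<subseteq> S \<Longrightarrow> x \<in> rootsp sc br T \<beta>"
  unfolding rootsp_def by auto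

lemma rootsp_cong: "(\<And>h. h \<in> S \<Longrightarrow> \<alpha> h = \<beta> h) \<Longrightarrow> rootsp sc br S \<alpha> = rootsp sc br S \<beta>"
  unfolding rootsp_def by auto

lemma br_rootsp:
  assumes "x \<in> rootsp sc br S \<mu>" and "y \<in> rootsp sc br S \<nu>"
  shows "br x y \<in> rootsp sc br S (\<lambda>h. \<mu> h + \<nu> h)"
proof (rule rootspI)
  fix h assume "h \<in> S"
  then show "br h (br x y) = sc (\<mu> h + \<nu> h) (br x y)"
    using assms br_derivation[of h x y] by (simp add: rootspD br_sc1 br_sc2 vs.scale_left_distrib)
qed

lemma B_rootsp_eq_0:
  assumes "x \<in> rootsp sc br S \<mu>" and "y \<in> rootsp sc br S \<nu>" and "h \<in> S" and "\<mu> h + \<nu> h \<noteq> 0"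
  shows "B x y = 0"
proof -
  have "\<mu> h * B x y = B (br h x) y"
    using assms(1,3) by (simp add: rootspD B_sc1)
  also have "\<dots> = - B x (br h y)"
    by (simp add: br_anti[of h x] B_minus1 B_inv)
  also have "\<dots> = - (\<nu> h * B x y)"
    using assms(2,3) by (simp add: rootspD B_sc2)
  finally have "\<mu> h * B x y = - (\<nu> h * B x y)" .
  then have "(\<mu> h + \<nu> h) * B x y = 0"
    by (simp add: algebra_simps)
  then show ?thesis
    using assms(4) by simp
qed

lemma rootsp_weight_unique:
  assumes "x \<in> rootsp sc br S \<mu>" "x \<in> rootsp sc br S \<nu>" "x \<noteq> 0" "h \<in> S"
  shows "\<mu> h = \<nu> h"
proof -
  have "sc (\<mu> h) x = sc (\<nu> h) x"
    using rootspD[OF assms(1,4)] rootspD[OF assms(2,4)] by metis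
  then show ?thesis
    using assms(3) by simp
qed

lemma rootsp_independent:
  assumes "finite I"
    and "\<forall>i\<in>I. \<forall>j\<in>I. i \<noteq> j \<longrightarrow> (\<exists>h\<in>S. f i h \<noteq> f j h)"
    and "\<forall>i\<in>I. w i \<in> rootsp sc br S (f i)"
    and "sum w I = 0"
  shows "\<forall>i\<in>I. w i = 0"
  using assms
proof (induction I arbitrary: w rule: finite_induct)
  case empty
  then show ?case by simp
next
  case (insert i0 I)
  have w_i0: "w i0 = - sum w I"
    using insert.prems(3) insert.hyps by (simp add: eq_neg_iff_add_eq_0)
  have shifted: "\<forall>i\<in>I. sc (f i h - f i0 h) (w i) = 0" if "h \<in> S" for h
  proof -
    have "br h (w i0) = sc (f i0 h) (w i0)"
      using insert.prems(2) that rootspD by blast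
    then have "(\<Sum>i\<in>I. br h (w i) - sc (f i0 h) (w i)) = 0"
      by (simp add: w_i0 br_minus2 br_sum2 sum_subtractf vs.scale_sum_right)
    also have "(\<Sum>i\<in>I. br h (w i) - sc (f i0 h) (w i)) = (\<Sum>i\<in>I. sc (f i h - f i0 h) (w i))"
      using insert.prems(2) that by (intro sum.cong) (auto simp: rootspD vs.scale_left_diff_distrib)
    finally have "(\<Sum>i\<in>I. sc (f i h - f i0 h) (w i)) = 0" .
    moreover have "\<forall>i\<in>I. sc (f i h - f i0 h) (w i) \<in> rootsp sc br S (f i)"
      using insert.prems(2) by (simp add: rootsp_scale)
    moreover have "\<forall>i\<in>I. \<forall>j\<in>I. i \<noteq> j \<longrightarrow> (\<exists>h\<in>S. f i h \<noteq> f j h)"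
      using insert.prems(1) by blast
    ultimately show ?thesis
      using insert.IH[of "\<lambda>i. sc (f i h - f i0 h) (w i)"] by blast
  qed
  have "\<forall>i\<in>I. w i = 0"
  proof
    fix i assume "i \<in> I"
    with insert.hyps insert.prems(1) obtain h where "h \<in> S" "f i h \<noteq> f i0 h"
      by (metis insertCI)
    with shifted \<open>i \<in> I\<close> show "w i = 0" by fastforce
  qed
  then show ?case
    using w_i0 by simp
qed

lemma ad_power_add: "(br y ^^ n) (x + z) = (br y ^^ n) x + (br y ^^ n) z"
  by (induct n) (auto simp: br_add2)

lemma ad_power_scale: "(br y ^^ n) (sc c x) = sc c ((br y ^^ n) x)"
  by (induct n) (auto simp: br_sc2)

lemma ad_power_zero [simp]: "(br y ^^ n) 0 = 0"
  by (induct n) auto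

lemma ad_power_diff: "(br y ^^ n) (x - z) = (br y ^^ n) x - (br y ^^ n) z"
  by (induct n) (auto simp: br_diff2)

lemma ad_power_sum: "(br y ^^ n) (sum f A) = (\<Sum>a\<in>A. (br y ^^ n) (f a))"
  by (induct A rule: infinite_finite_induct) (auto simp: ad_power_add)

lemma ad_power_rootsp:
  assumes "y \<in> rootsp sc br S (\<lambda>h. - \<beta> h)" and "v \<in> rootsp sc br S \<mu>"
  shows "(br y ^^ n) v \<in> rootsp sc br S (\<lambda>h. \<mu> h - of_nat n * \<beta> h)"
proof (induct n)
  case 0
  then show ?case using assms(2) by simp
next
  case (Suc n)
  have "(\<lambda>h. - \<beta> h + (\<mu> h - of_nat n * \<beta> h)) = (\<lambda>h. \<mu> h - of_nat (Suc n) * \<beta> h)"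
    by (simp add: fun_eq_iff algebra_simps)
  then show ?case
    using br_rootsp[OF assms(1) Suc] by simp
qed

lemma rootsp_vectors_independent:
  assumes "0 \<notin> V" and V: "\<And>v. v \<in> V \<Longrightarrow> v \<in> rootsp sc br S (wt v)"
    and distinct: "\<And>u v. u \<in> V \<Longrightarrow> v \<in> V \<Longrightarrow> u \<noteq> v \<Longrightarrow> \<exists>h\<in>S. wt u h \<noteq> wt v h"
  shows "vs.independent V"
  unfolding vs.independent_explicit_module
proof (intro allI impI)
  fix t u x
  assume t: "finite t" "t \<subseteq> V" "(\<Sum>v\<in>t. sc (u v) v) = 0" "x \<in> t"
  have "\<forall>v\<in>t. sc (u v) v = 0"
  proof (rule rootsp_independent[OF t(1) _ _ t(3)])
    show "\<forall>v\<in>t. \<forall>v'\<in>t. v \<noteq> v' \<longrightarrow> (\<exists>h\<in>S. wt v h \<noteq> wt v' h)"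
      using t(2) distinct by blast
    show "\<forall>v\<in>t. sc (u v) v \<in> rootsp sc br S (wt v)"
      using t(2) V by (auto intro: rootsp_scale)
  qed
  then show "u x = 0"
    using t(2,4) assms(1) by auto
qed

text \<open>The iterates (ad y)^n v have the pairwise distinct weights \<mu> - n \<beta>, so the nonzero
  ones are linearly independent, and there are at most dim g of them.\<close>

lemma ad_power_rootsp_eq_0:
  assumes T: "finite T" "vs.span T = UNIV"
    and y: "y \<in> rootsp sc br S (\<lambda>h. - \<beta> h)" and h0: "h0 \<in> S" "\<beta> h0 \<noteq> 0"
    and v: "v \<in> rootsp sc br S \<mu>"
  shows "(br y ^^ card T) v = 0"
proof (rule ccontr)
  assume nz: "(br y ^^ card T) v \<noteq> 0"
  define f where "f n = (br y ^^ n) v" for n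
  define wt where "wt n = (\<lambda>h. \<mu> h - of_nat n * \<beta> h)" for n
  have f_nz: "f n \<noteq> 0" if "n \<le> card T" for n
  proof
    assume "f n = 0"
    then have "(br y ^^ (card T - n)) (f n) = 0" by simp
    with nz that show False
      by (simp add: f_def flip: funpow_add[THEN fun_cong, unfolded o_apply])
  qed
  have f_wt: "f n \<in> rootsp sc br S (wt n)" for n
    unfolding f_def wt_def by (rule ad_power_rootsp[OF y v])
  have wt_distinct: "wt i h0 \<noteq> wt j h0" if "i \<noteq> j" for i j
    using that h0(2) by (simp add: wt_def)
  have inj: "inj_on f {..card T}"
  proof (rule inj_onI)
    fix i j assume i: "i \<in> {..card T}" and "f i = f j"
    then have "f i \<in> rootsp sc br S (wt j)"
      using f_wt[of j] by simp
    then have "wt i h0 = wt j h0"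
      using rootsp_weight_unique[OF f_wt[of i] _ _ h0(1)] f_nz i by auto
    then show "i = j"
      using wt_distinct by blast
  qed
  have "vs.independent (f ` {..card T})"
  proof (rule rootsp_vectors_independent[where S = S and wt = "\<lambda>v. wt (inv_into {..card T} f v)"])
    show "0 \<notin> f ` {..card T}"
      using f_nz by auto
    show "v \<in> rootsp sc br S (wt (inv_into {..card T} f v))" if "v \<in> f ` {..card T}" for v
      using that f_wt by (auto simp: inv_into_f_f[OF inj])
    show "\<exists>h\<in>S. wt (inv_into {..card T} f u) h \<noteq> wt (inv_into {..card T} f v) h"
      if uv: "u \<in> f ` {..card T}" "v \<in> f ` {..card T}" "u \<noteq> v" for u v
    proof -
      obtain i j where "i \<le> card T" "j \<le> card T" "u = f i" "v = f j"
        using uv(1,2) by auto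
      moreover from this have "i \<noteq> j"
        using uv(3) by auto
      ultimately show ?thesis
        using wt_distinct h0(1) by (auto simp: inv_into_f_f[OF inj])
    qed
  qed
  then have "card (f ` {..card T}) \<le> card T"
    using vs.independent_span_bound[OF T(1)] T(2) by blast
  then show False
    using inj by (simp add: card_image)
qed

lemma br_ad_power_commute:
  assumes "br (br x y) y = 0"
  shows "br x ((br y ^^ Suc n) z)
    = (br y ^^ Suc n) (br x z) + sc (of_nat (Suc n)) (br (br x y) ((br y ^^ n) z))"
proof (induct n)
  case 0
  then show ?case
    using br_derivation[of x y z] by (simp add: add.commute)
next
  case (Suc n)
  define w where "w = br x y"
  define u where "u = (br y ^^ Suc n) z"
  have commute: "br y (br w v) = br w (br y v)" for v
    using br_derivation[of w y v] assms by (simp add: w_def)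
  have "br x ((br y ^^ Suc (Suc n)) z) = br w u + br y (br x u)"
    using br_derivation[of x y u] by (simp add: u_def w_def)
  also have "br y (br x u) = (br y ^^ Suc (Suc n)) (br x z) + sc (of_nat (Suc n)) (br w u)"
    using Suc by (simp add: u_def w_def br_add2 br_sc2 commute[unfolded w_def])
  also have "br w u + \<dots> = (br y ^^ Suc (Suc n)) (br x z) + sc (of_nat (Suc (Suc n))) (br w u)"
    by (simp only: of_nat_Suc vs.scale_left_distrib vs.scale_one) (simp add: ac_simps)
  finally show ?case
    unfolding u_def w_def .
qed

lemma ad_bracket_nilpotent:
  assumes wx: "br (br x y) x = 0" and wy: "br (br x y) y = 0"
    and nil: "\<And>z. (br y ^^ K) z = 0"
  shows "(br (br x y) ^^ K) z = 0"
proof -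
  define w where "w = br x y"
  have commute: "(br w ^^ j) (br x u) = br x ((br w ^^ j) u)" for j u
    using br_derivation[of w x] wx by (induct j arbitrary: u) (simp_all add: w_def)
  have "(br w ^^ j) ((br y ^^ (K - j)) z) = 0" if "j \<le> K" for j z
    using that
  proof (induct j arbitrary: z)
    case 0
    then show ?case by (simp add: nil)
  next
    case (Suc j)
    define n where "n = K - Suc j"
    have K_j: "K - j = Suc n"
      using Suc.prems by (simp add: n_def)
    have "sc (of_nat (Suc n)) ((br w ^^ Suc j) ((br y ^^ n) z))
        = (br w ^^ j) (br x ((br y ^^ Suc n) z)) - (br w ^^ j) ((br y ^^ Suc n) (br x z))"
      using br_ad_power_commute[OF wy, of n z]
      by (simp add: ad_power_scale funpow_swap1 w_def flip: ad_power_diff)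
    also have "\<dots> = 0"
      using Suc K_j by (simp add: commute)
    finally show ?case
      unfolding vs.scale_eq_0_iff of_nat_eq_0_iff by (simp add: n_def)
  qed
  from this[of K z] show ?thesis
    by (simp add: w_def)
qed

lemma subalgebra_hull: "subalgebra sc br (subalgebra sc br hull X)"
proof (rule hull_in)
  fix \<T> assume "Ball \<T> (subalgebra sc br)"
  then show "subalgebra sc br (\<Inter>\<T>)"
    using vs.subspace_Inter[of \<T>] unfolding subalgebra_def by blast
qed

lemma fd_simple_center_eq_0:
  assumes "fd_simple sc br" and "\<And>z. br w z = 0"
  shows "w = 0"
proof -
  define I where "I = {w. \<forall>z. br w z = 0}"
  have "lie_ideal sc br I"
    unfolding lie_ideal_def vs.subspace_def I_def by (simp add: br_add1 br_sc1)
  moreover have "I \<noteq> UNIV"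
    using assms(1) unfolding fd_simple_def I_def by auto
  ultimately have "I = {0}"
    using assms(1) unfolding fd_simple_def by blast
  then show ?thesis
    using assms(2) by (auto simp: I_def)
qed

end

locale extended_affine =
  fixes sc :: "complex \<Rightarrow> 'a::ab_group_add \<Rightarrow> 'a"
    and br :: "'a \<Rightarrow> 'a \<Rightarrow> 'a"
    and B :: "'a \<Rightarrow> 'a \<Rightarrow> complex"
    and H :: "'a set"
  assumes eala: "eala sc br B H"

sublocale extended_affine \<subseteq> lie_algebra_form sc br B
  using eala unfolding eala_def lie_algebra_form_def by auto

context extended_affine
begin

lemma H_subspace: "vs.subspace H"
  and span_rootsp: "vs.span (\<Union>\<alpha>\<in>hdual sc H. rootsp sc br H \<alpha>) = UNIV"
  and rootsp_0_eq_H: "rootsp sc br H (\<lambda>_. 0) = H"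
  using eala unfolding eala_def subalgebra_def by auto

lemma H_abelian: "x \<in> H \<Longrightarrow> h \<in> H \<Longrightarrow> br h x = 0"
  using rootsp_0_eq_H unfolding rootsp_def by auto

lemma rootsp_eq_H: "(\<And>h. h \<in> H \<Longrightarrow> \<alpha> h = 0) \<Longrightarrow> rootsp sc br H \<alpha> = H"
  using rootsp_cong[of H \<alpha> "\<lambda>_. 0"] rootsp_0_eq_H by simp

lemma hdual_distinct_on_H: "\<alpha> \<in> hdual sc H \<Longrightarrow> \<beta> \<in> hdual sc H \<Longrightarrow> \<alpha> \<noteq> \<beta> \<Longrightarrow> \<exists>h\<in>H. \<alpha> h \<noteq> \<beta> h"
  unfolding hdual_def fun_eq_iff by (metis (mono_tags, lifting) mem_Collect_eq)

lemma hdual_sum: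
  assumes "\<alpha> \<in> hdual sc H" and "\<And>a. a \<in> A \<Longrightarrow> f a \<in> H"
  shows "\<alpha> (sum f A) = (\<Sum>a\<in>A. \<alpha> (f a))"
proof -
  have "\<alpha> (sc 0 0) = 0 * \<alpha> 0"
    using assms(1) vs.subspace_0[OF H_subspace] unfolding hdual_def by blast
  then have zero: "\<alpha> 0 = 0"
    by simp
  from assms(2) show ?thesis
  proof (induct A rule: infinite_finite_induct)
    case (insert a A)
    moreover have "sum f A \<in> H"
      using insert.prems by (intro vs.subspace_sum[OF H_subspace]) auto
    ultimately show ?case
      using assms(1) by (simp add: hdual_def)
  qed (simp_all add: zero)
qed

lemma rootsp_decomposition:
  "\<exists>F v. finite F \<and> F \<subseteq> hdual sc H \<and> (\<forall>\<alpha>\<in>F. v \<alpha> \<in> rootsp sc br H \<alpha>) \<and> x = sum v F"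
proof -
  have "x \<in> vs.span (\<Union>\<alpha>\<in>hdual sc H. rootsp sc br H \<alpha>)"
    using span_rootsp by simp
  then show ?thesis
  proof (induction rule: vs.span_induct_alt)
    case base
    show ?case by (rule exI[of _ "{}"]) simp
  next
    case (step c z y)
    from step.hyps obtain \<alpha> where \<alpha>: "\<alpha> \<in> hdual sc H" "z \<in> rootsp sc br H \<alpha>"
      by blast
    from step.IH obtain F v where F: "finite F" "F \<subseteq> hdual sc H"
      "\<forall>\<alpha>\<in>F. v \<alpha> \<in> rootsp sc br H \<alpha>" "y = sum v F"
      by blast
    define v' where "v' = v(\<alpha> := sc c z + (if \<alpha> \<in> F then v \<alpha> else 0))"
    have "sum v' (insert \<alpha> F) = sc c z + sum v F"
    proof (cases "\<alpha> \<in> F")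
      case True
      then show ?thesis
        using F(1) by (simp add: v'_def insert_absorb sum.remove add.assoc)
    next
      case False
      then have "sum v' F = sum v F"
        by (intro sum.cong) (auto simp: v'_def)
      then show ?thesis
        using F(1) False by (simp add: v'_def)
    qed
    moreover have "\<forall>\<beta>\<in>insert \<alpha> F. v' \<beta> \<in> rootsp sc br H \<beta>"
      using F(3) \<alpha>(2) by (auto simp: v'_def intro!: rootsp_add rootsp_scale)
    ultimately show ?case
      using F \<alpha>(1) by (intro exI[of _ "insert \<alpha> F"] exI[of _ v']) auto
  qed
qed

lemma toral_ad_nilpotent_eq_0:
  assumes "w \<in> H" and nil: "\<And>z. (br w ^^ K) z = 0"
  shows "br w z = 0"
proof -
  have "br w u = 0" if u: "u \<in> rootsp sc br H \<alpha>" for u \<alpha>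
  proof -
    have "(br w ^^ n) u = sc (\<alpha> w ^ n) u" for n
      using u \<open>w \<in> H\<close> by (induct n) (simp_all add: br_sc2 rootspD mult.commute)
    then have "\<alpha> w = 0 \<or> u = 0"
      using nil[of u] by (cases "u = 0") auto
    then show ?thesis
      using u \<open>w \<in> H\<close> by (auto simp: rootspD)
  qed
  moreover obtain F v where "\<forall>\<alpha>\<in>F. v \<alpha> \<in> rootsp sc br H \<alpha>" "z = sum v F"
    using rootsp_decomposition[of z] by blast
  ultimately show ?thesis
    by (auto simp: br_sum2 intro!: sum.neutral)
qed

lemma ad_power_eq_0:
  assumes "finite T" "vs.span T = UNIV" and "S \<subseteq> H"
    and y: "y \<in> rootsp sc br S (\<lambda>h. - \<beta> h)" and "h0 \<in> S" "\<beta> h0 \<noteq> 0"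
  shows "(br y ^^ card T) z = 0"
proof -
  obtain F v where F: "\<forall>\<alpha>\<in>F. v \<alpha> \<in> rootsp sc br H \<alpha>" "z = sum v F"
    using rootsp_decomposition[of z] by blast
  have "(br y ^^ card T) (v \<alpha>) = 0" if "\<alpha> \<in> F" for \<alpha>
    using ad_power_rootsp_eq_0[OF assms(1,2) y assms(5,6)] F(1) that rootsp_mono[OF _ \<open>S \<subseteq> H\<close>]
    by blast
  then show ?thesis
    using F(2) by (simp add: ad_power_sum)
qed

text \<open>If B(w, w) = 0 for w = [x, y], then \<beta>(w) = 0, so w commutes with x and y; as ad y is
  nilpotent, so is ad w, and a toral ad-nilpotent element of a simple Lie algebra is 0.
  This contradicts B(h0, w) = \<beta>(h0) B(x, y) \<noteq> 0.\<close>

lemma B_bracket_opposite_rootsp_neq_0: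
  assumes fd: "fd_simple sc br" and "S \<subseteq> H"
    and x: "x \<in> rootsp sc br S \<beta>" and y: "y \<in> rootsp sc br S (\<lambda>h. - \<beta> h)"
    and w: "br x y \<in> S" and h0: "h0 \<in> S" "\<beta> h0 \<noteq> 0" and "B x y \<noteq> 0"
  shows "B (br x y) (br x y) \<noteq> 0"
proof
  define w where "w = br x y"
  have B_w: "B h w = \<beta> h * B x y" if "h \<in> S" for h
    using x that by (simp add: w_def flip: B_inv) (simp add: rootspD B_sc1)
  assume "B (br x y) (br x y) = 0"
  then have "\<beta> w = 0"
    using B_w[of w] w \<open>B x y \<noteq> 0\<close> by (simp add: w_def)
  then have "br w x = 0" "br w y = 0"
    using x y w by (simp_all add: rootspD w_def)
  moreover obtain T where T: "finite T" "vs.span T = UNIV"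
    using fd unfolding fd_simple_def fin_dim_subspace_def by blast
  ultimately have nil: "(br w ^^ card T) z = 0" for z
    using ad_power_eq_0[OF T \<open>S \<subseteq> H\<close> y h0] ad_bracket_nilpotent by (simp add: w_def)
  have "br w z = 0" for z
    by (rule toral_ad_nilpotent_eq_0[OF _ nil]) (use w \<open>S \<subseteq> H\<close> in \<open>auto simp: w_def\<close>)
  then have "w = 0"
    by (rule fd_simple_center_eq_0[OF fd])
  then show False
    using B_w[OF h0(1)] h0(2) \<open>B x y \<noteq> 0\<close> by simp
qed

definition nonzero_root_vectors :: "'a set" where
  "nonzero_root_vectors = (\<Union>\<beta>\<in>{\<beta> \<in> hdual sc H. \<exists>h\<in>H. \<beta> h \<noteq> 0}. rootsp sc br H \<beta>)"

lemma span_nonzero_root_vectors_H: "vs.span (nonzero_root_vectors \<union> H) = UNIV"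
proof -
  have "rootsp sc br H \<alpha> \<subseteq> nonzero_root_vectors \<union> H" if "\<alpha> \<in> hdual sc H" for \<alpha>
    using that rootsp_eq_H[of \<alpha>] unfolding nonzero_root_vectors_def by blast
  then have "vs.span (\<Union>\<alpha>\<in>hdual sc H. rootsp sc br H \<alpha>) \<subseteq> vs.span (nonzero_root_vectors \<union> H)"
    by (intro vs.span_mono) blast
  then show ?thesis
    using span_rootsp by blast
qed

text \<open>By minimality, the generated subalgebra lies in the subalgebra of its elements x with
  [x, H] contained in it.\<close>

lemma hull_nonzero_root_vectors_br_H:
  assumes "x \<in> subalgebra sc br hull nonzero_root_vectors" and "h \<in> H"
  shows "br x h \<in> subalgebra sc br hull nonzero_root_vectors"
proof -
  define N where "N = subalgebra sc br hull nonzero_root_vectors"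
  have "subalgebra sc br N"
    unfolding N_def by (rule subalgebra_hull)
  then have N: "vs.subspace N" "\<And>x y. x \<in> N \<Longrightarrow> y \<in> N \<Longrightarrow> br x y \<in> N"
    unfolding subalgebra_def by blast+
  define T where "T = {x \<in> N. \<forall>h\<in>H. br x h \<in> N}"
  have "nonzero_root_vectors \<subseteq> T"
  proof
    fix g assume g: "g \<in> nonzero_root_vectors"
    then obtain \<beta> where "g \<in> rootsp sc br H \<beta>"
      by (auto simp: nonzero_root_vectors_def)
    then have "br g h = - sc (\<beta> h) g" if "h \<in> H" for h
      using that by (simp add: br_anti[of g h] rootspD)
    moreover have "g \<in> N"
      using g unfolding N_def by (rule hull_inc)
    ultimately show "g \<in> T"
      using N(1) by (auto simp: T_def vs.subspace_neg vs.subspace_scale)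
  qed
  moreover have "subalgebra sc br T"
    unfolding subalgebra_def
  proof
    show "vs.subspace T"
      using N(1) unfolding vs.subspace_def T_def by (auto simp: br_add1 br_sc1)
    have "br (br x y) h = br x (br y h) - br y (br x h)" for x y h
      using br_derivation[of x y h] by (simp add: algebra_simps)
    then show "\<forall>x\<in>T. \<forall>y\<in>T. br x y \<in> T"
      using N by (auto simp: T_def vs.subspace_diff)
  qed
  ultimately have "N \<subseteq> T"
    unfolding N_def by (rule hull_minimal)
  then show ?thesis
    using assms by (auto simp: T_def N_def)
qed

lemma lie_ideal_hull_nonzero_root_vectors:
  "lie_ideal sc br (subalgebra sc br hull nonzero_root_vectors)"
proof -
  let ?N = "subalgebra sc br hull nonzero_root_vectors"
  have N: "vs.subspace ?N" "\<And>x y. x \<in> ?N \<Longrightarrow> y \<in> ?N \<Longrightarrow> br x y \<in> ?N"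
    using subalgebra_hull[of nonzero_root_vectors] unfolding subalgebra_def by blast+
  have "br x y \<in> ?N" if x: "x \<in> ?N" for x y
  proof -
    have "br x g \<in> ?N" if "g \<in> nonzero_root_vectors" for g
      using N(2)[OF x hull_inc[OF that]] .
    moreover have "br x h \<in> ?N" if "h \<in> H" for h
      using hull_nonzero_root_vectors_br_H[OF x that] .
    ultimately have "nonzero_root_vectors \<union> H \<subseteq> {y. br x y \<in> ?N}"
      by blast
    moreover have "vs.subspace {y. br x y \<in> ?N}"
      using N(1) unfolding vs.subspace_def by (simp add: br_add2 br_sc2)
    ultimately have "vs.span (nonzero_root_vectors \<union> H) \<subseteq> {y. br x y \<in> ?N}"
      by (rule vs.span_minimal)
    then show ?thesis
      using span_nonzero_root_vectors_H by blast
  qed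
  with N(1) show ?thesis
    unfolding lie_ideal_def by blast
qed

lemma fd_simple_subalgebra_eq_UNIV:
  assumes fd: "fd_simple sc br" and "subalgebra sc br A" and "nonzero_root_vectors \<subseteq> A"
  shows "A = UNIV"
proof -
  let ?N = "subalgebra sc br hull nonzero_root_vectors"
  have "?N \<noteq> {0}"
  proof
    assume "?N = {0}"
    then have "nonzero_root_vectors \<subseteq> {0}"
      using hull_subset[of nonzero_root_vectors "subalgebra sc br"] by simp
    then have "nonzero_root_vectors \<union> H \<subseteq> H"
      using vs.subspace_0[OF H_subspace] by auto
    then have "vs.span (nonzero_root_vectors \<union> H) \<subseteq> H"
      by (rule vs.span_minimal[OF _ H_subspace])
    then have "x \<in> H" for x
      using span_nonzero_root_vectors_H by auto
    then have "br x y = 0" for x y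
      using H_abelian by simp
    then show False
      using fd unfolding fd_simple_def by simp
  qed
  moreover have "lie_ideal sc br I \<Longrightarrow> I = {0} \<or> I = UNIV" for I
    using fd unfolding fd_simple_def by simp
  ultimately have "?N = UNIV"
    using lie_ideal_hull_nonzero_root_vectors by blast
  moreover have "?N \<subseteq> A"
    using assms(2,3) by (intro hull_minimal)
  ultimately show ?thesis
    by blast
qed

end

locale twisted_eala = extended_affine sc br B H
  for sc :: "complex \<Rightarrow> 'a::ab_group_add \<Rightarrow> 'a" and br B H +
  fixes \<sigma> :: "'a \<Rightarrow> 'a" and m :: nat and \<omega> :: complex
  assumes admissible: "admissible_aut sc br B H \<sigma> m"
    and primitive: "primitive_root \<omega> m"
    and prime: "prime m"

context twisted_eala
begin

abbreviation H\<^sub>\<sigma> :: "'a set" where "H\<^sub>\<sigma> \<equiv> H \<inter> fixed_pts \<sigma>"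

abbreviation \<pi> :: "int \<Rightarrow> 'a \<Rightarrow> 'a" where "\<pi> \<equiv> pi_k sc \<sigma> m \<omega>"

lemma mem_fixed_pts [simp]: "x \<in> fixed_pts \<sigma> \<longleftrightarrow> \<sigma> x = x"
  by (simp add: fixed_pts_def)

lemma \<sigma>_add: "\<sigma> (x + y) = \<sigma> x + \<sigma> y"
  and \<sigma>_scale: "\<sigma> (sc c x) = sc c (\<sigma> x)"
  and \<sigma>_br: "\<sigma> (br x y) = br (\<sigma> x) (\<sigma> y)"
  and \<sigma>_order: "\<sigma> ^^ m = id"
  and \<sigma>_H: "\<sigma> ` H = H"
  and B_\<sigma>: "B (\<sigma> x) (\<sigma> y) = B x y"
  using admissible unfolding admissible_aut_def by auto

lemma \<sigma>_zero [simp]: "\<sigma> 0 = 0"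
  using \<sigma>_add[of 0 0] by simp

lemma \<sigma>_diff: "\<sigma> (x - y) = \<sigma> x - \<sigma> y"
  using \<sigma>_add[of "x - y" y] by (simp add: algebra_simps)

lemma fixed_centralizer_subset_H:
  "\<sigma> x = x \<Longrightarrow> (\<And>h. h \<in> H\<^sub>\<sigma> \<Longrightarrow> br h x = 0) \<Longrightarrow> x \<in> H"
  using admissible unfolding admissible_aut_def by auto

lemma m_pos: "0 < m"
  using prime prime_gt_0_nat by blast

lemma \<omega>_neq_0: "\<omega> \<noteq> 0"
  using primitive_root_neq_0[OF primitive m_pos] .

lemma \<omega>_powi_mult_m: "\<omega> powi (int m * a) = 1"
  using primitive_root_powi_eq_1_iff[OF primitive m_pos] by simp

lemma \<omega>_powi_add: "\<omega> powi (a + b) = \<omega> powi a * \<omega> powi b"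
  using \<omega>_neq_0 by (simp add: power_int_add)

lemma funpow_\<sigma>_add: "(\<sigma> ^^ n) (x + y) = (\<sigma> ^^ n) x + (\<sigma> ^^ n) y"
  by (induct n) (auto simp: \<sigma>_add)

lemma funpow_\<sigma>_zero [simp]: "(\<sigma> ^^ n) 0 = 0"
  using funpow_\<sigma>_add[of n 0 0] by simp

lemma funpow_\<sigma>_scale: "(\<sigma> ^^ n) (sc c x) = sc c ((\<sigma> ^^ n) x)"
  by (induct n) (auto simp: \<sigma>_scale)

lemma funpow_\<sigma>_br: "(\<sigma> ^^ n) (br x y) = br ((\<sigma> ^^ n) x) ((\<sigma> ^^ n) y)"
  by (induct n) (auto simp: \<sigma>_br)

lemma B_funpow_\<sigma>: "B ((\<sigma> ^^ n) x) ((\<sigma> ^^ n) y) = B x y"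
  by (induct n) (auto simp: B_\<sigma>)

lemma funpow_\<sigma>_H: "x \<in> H \<Longrightarrow> (\<sigma> ^^ n) x \<in> H"
  by (induct n) (use \<sigma>_H in auto)

lemma funpow_\<sigma>_sum: "(\<sigma> ^^ n) (sum f A) = (\<Sum>a\<in>A. (\<sigma> ^^ n) (f a))"
  by (induct A rule: infinite_finite_induct) (auto simp: funpow_\<sigma>_add)

lemma funpow_\<sigma>_fixed: "\<sigma> h = h \<Longrightarrow> (\<sigma> ^^ n) h = h"
  by (induct n) auto

lemma funpow_\<sigma>_mult_order: "(\<sigma> ^^ (m * q)) x = x"
  by (induct q) (auto simp: \<sigma>_order funpow_add)

lemma sum_funpow_\<sigma>_fixed: "\<sigma> (\<Sum>j<m. (\<sigma> ^^ j) h) = (\<Sum>j<m. (\<sigma> ^^ j) h)"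
  using funpow_\<sigma>_sum[of 1 "\<lambda>j. (\<sigma> ^^ j) h" "{..<m}"]
    sum_lessThan_Suc_periodic[of "\<lambda>j. (\<sigma> ^^ j) h" m] \<sigma>_order
  by (simp add: funpow_swap1)

lemma funpow_\<sigma>_rootsp_fixed:
  assumes "u \<in> rootsp sc br S \<alpha>" and "S \<subseteq> fixed_pts \<sigma>"
  shows "(\<sigma> ^^ n) u \<in> rootsp sc br S \<alpha>"
proof (rule rootspI)
  fix h assume "h \<in> S"
  then have "br h ((\<sigma> ^^ n) u) = (\<sigma> ^^ n) (br h u)"
    using assms(2) funpow_\<sigma>_fixed[of h n] by (auto simp: funpow_\<sigma>_br)
  then show "br h ((\<sigma> ^^ n) u) = sc (\<alpha> h) ((\<sigma> ^^ n) u)"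
    using assms(1) \<open>h \<in> S\<close> by (simp add: rootspD funpow_\<sigma>_scale)
qed

lemma zero_in_eigsp [simp]: "0 \<in> eigsp sc \<sigma> \<omega> n"
  by (simp add: eigsp_def)

lemma eigspD: "x \<in> eigsp sc \<sigma> \<omega> k \<Longrightarrow> \<sigma> x = sc (\<omega> powi k) x"
  by (simp add: eigsp_def)

lemma funpow_\<sigma>_eigsp: "x \<in> eigsp sc \<sigma> \<omega> k \<Longrightarrow> (\<sigma> ^^ i) x = sc (\<omega> powi (int i * k)) x"
  by (induct i) (simp_all add: eigspD \<sigma>_scale flip: \<omega>_powi_add, simp add: algebra_simps)

lemma \<pi>_def': "\<pi> k x = sc (1 / of_nat m) (\<Sum>i<m. sc (\<omega> powi (- (int i * k))) ((\<sigma> ^^ i) x))"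
  by (simp add: pi_k_def)

lemma \<pi>_add: "\<pi> k (x + y) = \<pi> k x + \<pi> k y"
  by (simp add: \<pi>_def' funpow_\<sigma>_add vs.scale_right_distrib sum.distrib)

lemma \<pi>_scale: "\<pi> k (sc c x) = sc c (\<pi> k x)"
  by (simp add: \<pi>_def' funpow_\<sigma>_scale vs.scale_sum_right ac_simps)

lemma \<pi>_H: "x \<in> H \<Longrightarrow> \<pi> k x \<in> H"
  unfolding \<pi>_def' using H_subspace
  by (intro vs.subspace_scale vs.subspace_sum funpow_\<sigma>_H) auto

lemma \<pi>_rootsp_fixed:
  assumes "u \<in> rootsp sc br S \<alpha>" and "S \<subseteq> fixed_pts \<sigma>"
  shows "\<pi> k u \<in> rootsp sc br S \<alpha>"
  unfolding \<pi>_def' using assms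
  by (intro rootsp_scale rootsp_sum funpow_\<sigma>_rootsp_fixed)

lemma \<pi>_eigsp: "x \<in> eigsp sc \<sigma> \<omega> k \<Longrightarrow> \<pi> k x = x"
  using m_pos
  by (simp add: \<pi>_def' funpow_\<sigma>_eigsp vs.sum_constant_scale
      flip: \<omega>_powi_add[of "- (int _ * k)" "int _ * k"])

lemma \<pi>_in_eigsp: "\<pi> k x \<in> eigsp sc \<sigma> \<omega> k"
proof -
  define g where "g i = sc (\<omega> powi (- (int i * k))) ((\<sigma> ^^ i) x)" for i
  have shift: "sc (\<omega> powi (- (int i * k))) ((\<sigma> ^^ Suc i) x) = sc (\<omega> powi k) (g (Suc i))" for i
    by (simp add: g_def flip: \<omega>_powi_add) (simp add: algebra_simps)
  have "\<sigma> (\<pi> k x) = sc (1 / of_nat m) (\<Sum>i<m. sc (\<omega> powi (- (int i * k))) ((\<sigma> ^^ Suc i) x))"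
    by (simp add: \<pi>_def' \<sigma>_scale funpow_\<sigma>_sum[of 1, simplified])
  also have "\<dots> = sc (1 / of_nat m) (sc (\<omega> powi k) (\<Sum>i<m. g (Suc i)))"
    by (simp only: shift vs.scale_sum_right)
  also have "(\<Sum>i<m. g (Suc i)) = (\<Sum>i<m. g i)"
    by (rule sum_lessThan_Suc_periodic) (simp add: g_def \<sigma>_order \<omega>_powi_mult_m[of "- k", simplified])
  finally show ?thesis
    by (simp add: eigsp_def \<pi>_def' g_def vs.scale_left_commute)
qed

lemma window_orthogonality:
  assumes "i < m" and "j < m"
  shows "(\<Sum>a\<in>{c..<c + int m}. \<omega> powi (- (int i * a)) * \<omega> powi (- (int j * (k - a))))
    = (if i = j then of_nat m * \<omega> powi (- (int i * k)) else 0)"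
proof -
  have "\<omega> powi (- (int i * a)) * \<omega> powi (- (int j * (k - a)))
      = \<omega> powi (- (int j * k)) * \<omega> powi (a * (int j - int i))" for a
    by (simp flip: \<omega>_powi_add) (simp add: algebra_simps)
  moreover have "(\<Sum>a\<in>{c..<c + int m}. \<omega> powi (a * (int j - int i))) = 0" if "i \<noteq> j"
  proof (rule primitive_root_sum_powi_window[OF primitive m_pos])
    show "\<not> int m dvd int j - int i"
    proof
      assume "int m dvd int j - int i"
      then have "\<bar>int m\<bar> \<le> \<bar>int j - int i\<bar>"
        using \<open>i \<noteq> j\<close> by (intro dvd_imp_le_int) auto
      with assms show False
        by linarith
    qed
  qed
  ultimately show ?thesis
    by (simp add: sum_distrib_left[symmetric])
qed

lemma \<pi>_br_window_sum:
  "(\<Sum>a\<in>{c..<c + int m}. br (\<pi> a x) (\<pi> (k - a) y)) = \<pi> k (br x y)"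
proof -
  define Z where "Z i j = br ((\<sigma> ^^ i) x) ((\<sigma> ^^ j) y)" for i j
  define e where "e a i j = \<omega> powi (- (int i * a)) * \<omega> powi (- (int j * (k - a)))" for a i j
  define W where "W = {c..<c + int m}"
  have "br (\<pi> a x) (\<pi> (k - a) y)
      = sc (1 / of_nat m * (1 / of_nat m)) (\<Sum>i<m. \<Sum>j<m. sc (e a i j) (Z i j))" for a
    by (simp add: \<pi>_def' e_def Z_def br_scale_scale br_sum1 br_sum2 vs.scale_sum_right) (rule sum.swap)
  then have "(\<Sum>a\<in>W. br (\<pi> a x) (\<pi> (k - a) y))
      = sc (1 / of_nat m * (1 / of_nat m)) (\<Sum>a\<in>W. \<Sum>i<m. \<Sum>j<m. sc (e a i j) (Z i j))"
    by (simp add: vs.scale_sum_right)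
  also have "(\<Sum>a\<in>W. \<Sum>i<m. \<Sum>j<m. sc (e a i j) (Z i j))
      = (\<Sum>i<m. \<Sum>j<m. sc (\<Sum>a\<in>W. e a i j) (Z i j))"
    by (subst sum.swap, rule sum.cong[OF refl], subst sum.swap) (simp add: vs.scale_sum_left)
  also have "\<dots> = (\<Sum>i<m. \<Sum>j<m. if j = i then sc (of_nat m * \<omega> powi (- (int i * k))) (Z i i) else 0)"
    unfolding W_def e_def by (intro sum.cong refl) (auto simp: window_orthogonality)
  also have "\<dots> = (\<Sum>i<m. sc (of_nat m * \<omega> powi (- (int i * k))) (Z i i))"
    by simp
  also have "sc (1 / of_nat m * (1 / of_nat m)) \<dots> = \<pi> k (br x y)"
    using m_pos by (simp add: \<pi>_def' Z_def funpow_\<sigma>_br vs.scale_sum_right)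
  finally show ?thesis
    by (simp add: W_def)
qed

lemma B_\<pi>_eigsp:
  assumes "x \<in> eigsp sc \<sigma> \<omega> a"
  shows "B x (\<pi> (- a) y) = B x y"
proof -
  have "\<omega> powi (int i * a) * B x ((\<sigma> ^^ i) y) = B x y" for i
    using B_funpow_\<sigma>[of i x y] assms by (simp add: funpow_\<sigma>_eigsp B_sc1)
  then show ?thesis
    using m_pos by (simp add: \<pi>_def' B_sc2 B_sum2)
qed

lemma invariant_hdual_eq_0:
  assumes "\<alpha> \<in> hdual sc H" and inv: "\<And>h. h \<in> H \<Longrightarrow> \<alpha> (\<sigma> h) = \<alpha> h"
    and fixed: "\<And>h. h \<in> H\<^sub>\<sigma> \<Longrightarrow> \<alpha> h = 0" and "h \<in> H"
  shows "\<alpha> h = 0"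
proof -
  have "\<alpha> ((\<sigma> ^^ j) h) = \<alpha> h" for j
    using inv \<open>h \<in> H\<close> by (induct j) (auto simp: funpow_\<sigma>_H)
  moreover have "\<alpha> (\<Sum>j<m. (\<sigma> ^^ j) h) = (\<Sum>j<m. \<alpha> ((\<sigma> ^^ j) h))"
    using \<open>h \<in> H\<close> by (intro hdual_sum[OF assms(1)] funpow_\<sigma>_H)
  ultimately have "\<alpha> (\<Sum>j<m. (\<sigma> ^^ j) h) = of_nat m * \<alpha> h"
    by simp
  moreover have "(\<Sum>j<m. (\<sigma> ^^ j) h) \<in> H\<^sub>\<sigma>"
    using sum_funpow_\<sigma>_fixed \<open>h \<in> H\<close> H_subspace funpow_\<sigma>_H by (auto intro: vs.subspace_sum)
  ultimately show ?thesis
    using fixed m_pos by force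
qed

text \<open>This is where the primality of m enters: any 0 < d < m generates Z/m.\<close>

lemma invariant_of_funpow_invariant:
  assumes "0 < d" "d < m" and inv_d: "\<And>h. h \<in> H \<Longrightarrow> \<alpha> ((\<sigma> ^^ d) h) = \<alpha> h" and "h \<in> H"
  shows "\<alpha> (\<sigma> h) = \<alpha> h"
proof -
  have inv_dn: "\<alpha> ((\<sigma> ^^ (d * n)) h) = \<alpha> h" if "h \<in> H" for n h
    using that by (induct n) (simp_all add: inv_d funpow_add funpow_\<sigma>_H mult.commute[of d])
  have "coprime d m"
    using assms(1,2) prime by (metis coprime_commute dvd_imp_le not_le prime_imp_coprime_nat)
  then obtain x q where "d * x = m * q + 1"
    using bezout_nat[of d m] assms(1) by (auto simp: coprime_iff_gcd_eq_1 gcd.commute)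
  then have "(\<sigma> ^^ (d * x)) h = \<sigma> h"
    by (simp add: funpow_add funpow_\<sigma>_mult_order)
  then show ?thesis
    using inv_dn[OF \<open>h \<in> H\<close>, of x] by simp
qed

lemma hdual_not_funpow_invariant:
  assumes "\<alpha> \<in> hdual sc H" and fixed: "\<And>h. h \<in> H\<^sub>\<sigma> \<Longrightarrow> \<alpha> h = 0"
    and "h \<in> H" "\<alpha> h \<noteq> 0" and "0 < d" "d < m"
  shows "\<exists>h\<in>H. \<alpha> ((\<sigma> ^^ d) h) \<noteq> \<alpha> h"
  using invariant_of_funpow_invariant[OF assms(5,6), of \<alpha>]
    invariant_hdual_eq_0[OF assms(1) _ fixed \<open>h \<in> H\<close>] \<open>\<alpha> h \<noteq> 0\<close>
  by blast

lemma conjugate_roots_distinct: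
  assumes \<alpha>: "\<alpha> \<in> hdual sc H" and fixed: "\<And>h. h \<in> H\<^sub>\<sigma> \<Longrightarrow> \<alpha> h = 0"
    and "h \<in> H" "\<alpha> h \<noteq> 0" and ij: "i < j" "j < m"
  shows "\<exists>h\<in>H. \<alpha> ((\<sigma> ^^ (m - i)) h) \<noteq> \<alpha> ((\<sigma> ^^ (m - j)) h)"
proof -
  have "0 < j - i" "j - i < m"
    using ij by auto
  then obtain h' where "h' \<in> H" "\<alpha> ((\<sigma> ^^ (j - i)) h') \<noteq> \<alpha> h'"
    using hdual_not_funpow_invariant[OF \<alpha> fixed \<open>h \<in> H\<close> \<open>\<alpha> h \<noteq> 0\<close>] by blast
  moreover have "(\<sigma> ^^ (m - i)) ((\<sigma> ^^ j) h') = (\<sigma> ^^ (j - i)) ((\<sigma> ^^ m) h')"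
    using ij by (simp add: add.commute flip: funpow_add[THEN fun_cong, unfolded o_apply])
  moreover have "(\<sigma> ^^ (m - j)) ((\<sigma> ^^ j) h') = h'"
    using ij \<sigma>_order by (simp flip: funpow_add[THEN fun_cong, unfolded o_apply])
  ultimately have "\<alpha> ((\<sigma> ^^ (m - i)) ((\<sigma> ^^ j) h')) \<noteq> \<alpha> ((\<sigma> ^^ (m - j)) ((\<sigma> ^^ j) h'))"
    using \<sigma>_order by simp
  then show ?thesis
    using funpow_\<sigma>_H[OF \<open>h' \<in> H\<close>] by blast
qed

lemma funpow_\<sigma>_rootsp:
  assumes "z \<in> rootsp sc br H \<alpha>" and "j \<le> m"
  shows "(\<sigma> ^^ j) z \<in> rootsp sc br H (\<lambda>h. \<alpha> ((\<sigma> ^^ (m - j)) h))"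
proof (rule rootspI)
  fix h assume "h \<in> H"
  have "(\<sigma> ^^ j) ((\<sigma> ^^ (m - j)) h) = h"
    using assms(2) \<sigma>_order by (simp flip: funpow_add[THEN fun_cong, unfolded o_apply])
  then have "br h ((\<sigma> ^^ j) z) = (\<sigma> ^^ j) (br ((\<sigma> ^^ (m - j)) h) z)"
    by (metis funpow_\<sigma>_br)
  then show "br h ((\<sigma> ^^ j) z) = sc (\<alpha> ((\<sigma> ^^ (m - j)) h)) ((\<sigma> ^^ j) z)"
    using assms(1) funpow_\<sigma>_H[OF \<open>h \<in> H\<close>] by (simp add: rootspD funpow_\<sigma>_scale)
qed

lemma sum_funpow_\<sigma>_rootsp_in_H:
  assumes "z \<in> rootsp sc br H \<alpha>" and fixed: "\<And>h. h \<in> H\<^sub>\<sigma> \<Longrightarrow> \<alpha> h = 0"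
  shows "(\<Sum>j<m. (\<sigma> ^^ j) z) \<in> H"
proof (rule fixed_centralizer_subset_H)
  show "\<sigma> (\<Sum>j<m. (\<sigma> ^^ j) z) = (\<Sum>j<m. (\<sigma> ^^ j) z)"
    by (rule sum_funpow_\<sigma>_fixed)
  fix h assume "h \<in> H\<^sub>\<sigma>"
  then have "br h ((\<sigma> ^^ j) z) = 0" if "j < m" for j
    using rootspD[OF funpow_\<sigma>_rootsp[OF assms(1)], of j h] that fixed funpow_\<sigma>_fixed by simp
  then show "br h (\<Sum>j<m. (\<sigma> ^^ j) z) = 0"
    by (simp add: br_sum2)
qed

lemma hdual_vanishing_on_fixed_eq_0:
  assumes \<alpha>: "\<alpha> \<in> hdual sc H" and fixed: "\<And>h. h \<in> H\<^sub>\<sigma> \<Longrightarrow> \<alpha> h = 0"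
    and z: "z \<in> rootsp sc br H \<alpha>" "z \<noteq> 0" and "h \<in> H"
  shows "\<alpha> h = 0"
proof (rule ccontr)
  assume "\<alpha> h \<noteq> 0"
  define \<beta> where "\<beta> j = (\<lambda>h. \<alpha> ((\<sigma> ^^ (m - j)) h))" for j
  have \<beta>_funpow: "\<beta> j ((\<sigma> ^^ j) h) = \<alpha> h" if "j < m" for j h
    using that \<sigma>_order by (simp add: \<beta>_def flip: funpow_add[THEN fun_cong, unfolded o_apply])
  have \<beta>_distinct: "\<exists>h\<in>H. \<beta> i h \<noteq> \<beta> j h" if "i < j" "j < m" for i j
    using conjugate_roots_distinct[OF \<alpha> fixed \<open>h \<in> H\<close> \<open>\<alpha> h \<noteq> 0\<close> that] by (simp add: \<beta>_def)
  have \<beta>_nonzero: "\<exists>h'\<in>H. \<beta> j h' \<noteq> 0" if "j < m" for j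
    using \<beta>_funpow[OF that] funpow_\<sigma>_H[OF \<open>h \<in> H\<close>] \<open>\<alpha> h \<noteq> 0\<close> by metis
  define f where "f j = (if j < m then \<beta> j else (\<lambda>_. 0))" for j
  define w where "w j = (if j < m then (\<sigma> ^^ j) z else - (\<Sum>j<m. (\<sigma> ^^ j) z))" for j
  have "\<forall>j\<in>{..m}. w j = 0"
  proof (rule rootsp_independent)
    show "\<forall>i\<in>{..m}. \<forall>j\<in>{..m}. i \<noteq> j \<longrightarrow> (\<exists>h\<in>H. f i h \<noteq> f j h)"
    proof (intro ballI impI)
      fix i j assume "i \<in> {..m}" "j \<in> {..m}" "i \<noteq> j"
      then consider "i < m" "j < m" "i < j" | "i < m" "j < m" "j < i" | "i = m" "j < m" | "j = m" "i < m"
        by fastforce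
      then show "\<exists>h\<in>H. f i h \<noteq> f j h"
        by cases (use \<beta>_distinct \<beta>_nonzero in \<open>auto simp: f_def\<close>, metis)
    qed
    show "\<forall>j\<in>{..m}. w j \<in> rootsp sc br H (f j)"
      using funpow_\<sigma>_rootsp[OF z(1)] sum_funpow_\<sigma>_rootsp_in_H[OF z(1) fixed] H_subspace rootsp_0_eq_H
      by (auto simp: w_def f_def \<beta>_def vs.subspace_neg)
    show "sum w {..m} = 0"
      by (simp add: w_def lessThan_Suc_atMost[symmetric])
  qed simp
  then have "w 0 = 0"
    by simp
  then show False
    using z(2) m_pos by (simp add: w_def)
qed

lemma centralizer_subset_H:
  assumes "\<And>h. h \<in> H\<^sub>\<sigma> \<Longrightarrow> br h x = 0"
  shows "x \<in> H"
proof -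
  obtain F v where F: "finite F" "F \<subseteq> hdual sc H" "\<forall>\<alpha>\<in>F. v \<alpha> \<in> rootsp sc br H \<alpha>" "x = sum v F"
    using rootsp_decomposition[of x] by blast
  have vanish: "\<alpha> h = 0 \<or> v \<alpha> = 0" if "\<alpha> \<in> F" "h \<in> H\<^sub>\<sigma>" for \<alpha> h
  proof -
    have "(\<Sum>\<alpha>\<in>F. sc (\<alpha> h) (v \<alpha>)) = (\<Sum>\<alpha>\<in>F. br h (v \<alpha>))"
      using F(3) \<open>h \<in> H\<^sub>\<sigma>\<close> by (intro sum.cong) (auto simp: rootspD)
    also have "\<dots> = 0"
      using assms[OF \<open>h \<in> H\<^sub>\<sigma>\<close>] F(4) by (simp add: br_sum2)
    finally have "(\<Sum>\<alpha>\<in>F. sc (\<alpha> h) (v \<alpha>)) = 0" .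
    then have "\<forall>\<alpha>\<in>F. sc (\<alpha> h) (v \<alpha>) = 0"
      using F hdual_distinct_on_H by (intro rootsp_independent[where S = H]) (auto intro: rootsp_scale, blast)
    then show ?thesis
      using that(1) by simp
  qed
  have "v \<alpha> \<in> H" if "\<alpha> \<in> F" for \<alpha>
  proof (cases "v \<alpha> = 0")
    case True
    then show ?thesis
      using vs.subspace_0[OF H_subspace] by simp
  next
    case False
    then have "\<alpha> h = 0" if "h \<in> H\<^sub>\<sigma>" for h
      using vanish \<open>\<alpha> \<in> F\<close> that by blast
    then have "\<alpha> h = 0" if "h \<in> H" for h
      using hdual_vanishing_on_fixed_eq_0[of \<alpha> "v \<alpha>" h] F(2,3) \<open>\<alpha> \<in> F\<close> False that by auto
    then show ?thesis
      using rootsp_eq_H[of \<alpha>] F(3) \<open>\<alpha> \<in> F\<close> by blast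
  qed
  then show ?thesis
    using F(4) H_subspace vs.subspace_sum by blast
qed

lemma B_fixed_nondegenerate:
  assumes "t \<in> H\<^sub>\<sigma>" and orth: "\<And>h. h \<in> H\<^sub>\<sigma> \<Longrightarrow> B h t = 0"
  shows "t = 0"
proof -
  have "B u t = 0" if u: "u \<in> rootsp sc br H \<alpha>" for u \<alpha>
  proof (cases "\<forall>h\<in>H. \<alpha> h = 0")
    case True
    then have "u \<in> H"
      using u rootsp_eq_H by blast
    have "B ((\<sigma> ^^ i) u) t = B u t" for i
      using B_funpow_\<sigma>[of i u t] funpow_\<sigma>_fixed[of t i] assms(1) by simp
    then have "B (\<Sum>i<m. (\<sigma> ^^ i) u) t = of_nat m * B u t"
      by (simp add: B_sum1)
    moreover have "(\<Sum>i<m. (\<sigma> ^^ i) u) \<in> H\<^sub>\<sigma>"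
      using sum_funpow_\<sigma>_fixed \<open>u \<in> H\<close> funpow_\<sigma>_H by (auto intro: vs.subspace_sum[OF H_subspace])
    ultimately show ?thesis
      using orth m_pos by force
  next
    case False
    then obtain h where "h \<in> H" "\<alpha> h \<noteq> 0"
      by blast
    moreover have "t \<in> rootsp sc br H (\<lambda>_. 0)"
      using assms(1) rootsp_0_eq_H by blast
    ultimately show ?thesis
      using B_rootsp_eq_0[OF u] by simp
  qed
  moreover have "B y t = 0" for y
  proof -
    obtain F v where "\<forall>\<alpha>\<in>F. v \<alpha> \<in> rootsp sc br H \<alpha>" "y = sum v F"
      using rootsp_decomposition[of y] by blast
    with calculation show ?thesis
      by (auto simp: B_sum1 intro!: sum.neutral)
  qed
  ultimately show ?thesis
    using B_nondeg[of t] by (simp add: B_sym[of t])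
qed

lemma exists_opposite_rootsp:
  assumes x: "x \<in> eigsp sc \<sigma> \<omega> a" "x \<in> rootsp sc br H\<^sub>\<sigma> \<beta>" "x \<noteq> 0"
  shows "\<exists>y. y \<in> eigsp sc \<sigma> \<omega> (- a) \<and> y \<in> rootsp sc br H\<^sub>\<sigma> (\<lambda>h. - \<beta> h) \<and> B x y \<noteq> 0"
proof -
  obtain y0 where "B x y0 \<noteq> 0"
    using B_nondeg x(3) by blast
  moreover obtain F v where F: "\<forall>\<alpha>\<in>F. v \<alpha> \<in> rootsp sc br H \<alpha>" "y0 = sum v F"
    using rootsp_decomposition[of y0] by blast
  ultimately obtain \<alpha> where "\<alpha> \<in> F" and B_v: "B x (v \<alpha>) \<noteq> 0"
    by (metis B_sum2 sum.neutral)
  define y where "y = \<pi> (- a) (v \<alpha>)"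
  have "B x y \<noteq> 0"
    using B_v x(1) by (simp add: y_def B_\<pi>_eigsp)
  moreover have y_\<alpha>: "y \<in> rootsp sc br H\<^sub>\<sigma> \<alpha>"
    unfolding y_def using F(1) \<open>\<alpha> \<in> F\<close> by (auto intro: \<pi>_rootsp_fixed rootsp_mono)
  then have "y \<in> rootsp sc br H\<^sub>\<sigma> (\<lambda>h. - \<beta> h)"
    using B_rootsp_eq_0[OF x(2) y_\<alpha>] \<open>B x y \<noteq> 0\<close> rootsp_cong[of "H\<^sub>\<sigma>" \<alpha> "\<lambda>h. - \<beta> h"]
    by (metis add_eq_0_iff)
  ultimately show ?thesis
    using \<pi>_in_eigsp y_def by blast
qed

lemma exists_nonisotropic_coroot:
  assumes fd: "fd_simple sc br"
    and x: "x \<in> eigsp sc \<sigma> \<omega> a" "x \<in> rootsp sc br H\<^sub>\<sigma> \<beta>" "x \<noteq> 0"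
    and h0: "h0 \<in> H\<^sub>\<sigma>" "\<beta> h0 \<noteq> 0"
  shows "\<exists>t\<in>H\<^sub>\<sigma>. (\<forall>h\<in>H\<^sub>\<sigma>. B h t = \<beta> h) \<and> B t t \<noteq> 0"
proof -
  obtain y where y: "y \<in> eigsp sc \<sigma> \<omega> (- a)" "y \<in> rootsp sc br H\<^sub>\<sigma> (\<lambda>h. - \<beta> h)" "B x y \<noteq> 0"
    using exists_opposite_rootsp[OF x] by blast
  define w where "w = br x y"
  have "\<sigma> w = w"
    using x(1) y(1) by (simp add: w_def \<sigma>_br eigspD br_scale_scale flip: \<omega>_powi_add)
  moreover have "br h w = 0" if "h \<in> H\<^sub>\<sigma>" for h
    using rootspD[OF br_rootsp[OF x(2) y(2)] that] by (simp add: w_def)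
  ultimately have "w \<in> H\<^sub>\<sigma>"
    using fixed_centralizer_subset_H by simp
  have B_w: "B h w = \<beta> h * B x y" if "h \<in> H\<^sub>\<sigma>" for h
    using rootspD[OF x(2) that] by (simp add: w_def B_sc1 flip: B_inv)
  have "B w w \<noteq> 0"
    using B_bracket_opposite_rootsp_neq_0[OF fd _ x(2) y(2) _ h0 y(3)] \<open>w \<in> H\<^sub>\<sigma>\<close>
    by (simp add: w_def)
  define t where "t = sc (1 / B x y) w"
  have "t \<in> H\<^sub>\<sigma>"
    using \<open>w \<in> H\<^sub>\<sigma>\<close> vs.subspace_scale[OF H_subspace] by (simp add: t_def \<sigma>_scale)
  moreover have "B h t = \<beta> h" if "h \<in> H\<^sub>\<sigma>" for h
    using B_w[OF that] y(3) by (simp add: t_def B_sc2)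
  moreover have "B t t \<noteq> 0"
    using \<open>B w w \<noteq> 0\<close> y(3) by (simp add: t_def B_sc1 B_sc2)
  ultimately show ?thesis
    by blast
qed

end

lemma sum_support_subset_0:
  assumes "\<And>n. n \<noteq> 0 \<Longrightarrow> f n = (0::'a::zero)"
  shows "(\<Sum>a\<in>{a. f a \<noteq> 0}. g a) = (if f 0 = 0 then 0 else g 0)"
proof -
  have "{a. f a \<noteq> 0} = (if f 0 = 0 then {} else {0})"
    using assms by (cases "f 0 = 0") force+
  then show ?thesis
    by simp
qed

lemma aff_add_eq_plus: "aff_add X Y = X + Y"
  by (auto simp: aff_add_def split: prod.splits)

lemma aff_zero_eq_0: "aff_zero = 0"
  by (simp add: aff_zero_def zero_prod_def zero_fun_def)

lemma tens_0 [simp]: "tens a 0 = 0"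
  by (simp add: tens_def zero_prod_def zero_fun_def fun_eq_iff)

lemma tens_add: "tens a (x + y) = tens a x + tens a (y :: 'a::monoid_add)"
  by (simp add: tens_def fun_eq_iff)

lemma tens_sum: "tens a (sum f A) = (\<Sum>i\<in>A. tens a (f i :: 'a::comm_monoid_add))"
  by (induct A rule: infinite_finite_induct) (auto simp: tens_add)

lemma tens_eq_0_iff: "tens a x = 0 \<longleftrightarrow> x = 0"
  by (auto simp: tens_def zero_prod_def zero_fun_def fun_eq_iff)

lemma mem_aff_H:
  "(f, r, s) \<in> aff_H H \<sigma> \<longleftrightarrow> f 0 \<in> H \<and> \<sigma> (f 0) = f 0 \<and> (\<forall>n. n \<noteq> 0 \<longrightarrow> f n = 0)"
  by (simp add: aff_H_def fixed_pts_def)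

context twisted_eala
begin

abbreviation core :: "'a aff set" where "core \<equiv> aff_core sc br B H \<sigma> \<omega>"

lemma aff_scale_tens: "aff_scale sc c (tens a x) = tens a (sc c x)"
  by (simp add: tens_def aff_scale_def fun_eq_iff)

lemma aff_form_H:
  assumes "(f, r, s) \<in> aff_H H \<sigma>"
  shows "aff_form B (f, r, s) (g, r', s') = B (f 0) (g 0) + r * s' + r' * s"
  using assms sum_support_subset_0[of f "\<lambda>a. B (f a) (g (- a))"]
  by (auto simp: aff_form_def mem_aff_H)

lemma aff_br_H:
  assumes "(f, r, s) \<in> aff_H H \<sigma>"
  shows "aff_br sc br B (f, r, s) (g, r', s')
    = (\<lambda>n. br (f 0) (g n) + sc (s * of_int n) (g n) - sc (s' * of_int n) (f n), 0, 0)"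
  using assms sum_support_subset_0[of f "\<lambda>a. br (f a) (g (_ - a))"]
    sum_support_subset_0[of f "\<lambda>a. of_int a * B (f a) (g (- a))"]
  by (auto simp: aff_br_def mem_aff_H fun_eq_iff)

lemma aff_br_H_tens:
  assumes "(f, r, s) \<in> aff_H H \<sigma>"
  shows "aff_br sc br B (f, r, s) (tens a x) = tens a (br (f 0) x + sc (s * of_int a) x)"
  using assms by (auto simp: aff_br_H tens_def fun_eq_iff mem_aff_H)

lemma aff_br_tens:
  assumes "a + b \<noteq> 0"
  shows "aff_br sc br B (tens a u) (tens b v) = tens (a + b) (br u v)"
proof (cases "u = 0")
  case False
  then have "{c. (if c = a then u else 0) \<noteq> 0} = {a}"
    by auto
  then show ?thesis
    using assms by (auto simp: aff_br_def tens_def fun_eq_iff)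
qed (simp add: aff_br_def tens_def fun_eq_iff)

lemma tens_in_aff_rootsp:
  assumes "x \<in> eigsp sc \<sigma> \<omega> a"
    and "\<And>f r s. (f, r, s) \<in> aff_H H \<sigma> \<Longrightarrow> br (f 0) x + sc (s * of_int a) x = sc (\<phi> (f, r, s)) x"
  shows "tens a x \<in> aff_rootsp sc br B H \<sigma> \<omega> \<phi>"
proof -
  have "finite {n. fst (tens a x) n \<noteq> 0}"
    by (rule finite_subset[of _ "{a}"]) (auto simp: tens_def)
  then have "tens a x \<in> aff_carrier sc \<sigma> \<omega>"
    using assms(1) by (simp add: aff_carrier_def tens_def)
  then show ?thesis
    using assms(2) by (auto simp: aff_rootsp_def aff_br_H_tens aff_scale_tens)
qed

lemma aff_rootsp_kdelta_subset:
  assumes "k \<noteq> 0"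
  shows "aff_rootsp sc br B H \<sigma> \<omega> (kdelta H \<sigma> k) \<subseteq> tens k ` \<pi> k ` H"
proof
  fix X assume X: "X \<in> aff_rootsp sc br B H \<sigma> \<omega> (kdelta H \<sigma> k)"
  obtain f r s where X_eq: "X = (f, r, s)"
    by (cases X)
  have f_eig: "f n \<in> eigsp sc \<sigma> \<omega> n" for n
    using X by (simp add: X_eq aff_rootsp_def aff_carrier_def)
  have root: "aff_br sc br B Z X = aff_scale sc (kdelta H \<sigma> k Z) X" if "Z \<in> aff_H H \<sigma>" for Z
    using X that by (simp add: aff_rootsp_def)
  text \<open>Testing against d forces X to be homogeneous of degree k.\<close>
  have d: "((\<lambda>_. 0), 0, 1) \<in> aff_H H \<sigma>"
    by (simp add: mem_aff_H vs.subspace_0[OF H_subspace])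
  then have "(\<lambda>n. sc (of_int n) (f n), 0, 0) = ((\<lambda>n. sc (of_int k) (f n)), of_int k * r, of_int k * s)"
    using root[OF d] by (simp add: X_eq aff_br_H kdelta_def aff_scale_def)
  then have "r = 0" "s = 0" and f_k: "\<And>n. n \<noteq> k \<Longrightarrow> f n = 0"
    using assms by (auto simp: fun_eq_iff vs.scale_cancel_right)
  then have "X = tens k (f k)"
    by (auto simp: X_eq tens_def fun_eq_iff)
  moreover have "f k \<in> H"
  proof (rule centralizer_subset_H)
    fix h assume h: "h \<in> H\<^sub>\<sigma>"
    then have Z_h: "((\<lambda>n. if n = 0 then h else 0), 0, 0) \<in> aff_H H \<sigma>"
      by (simp add: mem_aff_H)
    show "br h (f k) = 0"
      using arg_cong[OF root[OF Z_h], of "\<lambda>Y. fst Y k"] Z_h \<open>r = 0\<close> \<open>s = 0\<close>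
      by (simp add: X_eq aff_br_H kdelta_def aff_scale_def)
  qed
  ultimately show "X \<in> tens k ` \<pi> k ` H"
    using \<pi>_eigsp[OF f_eig] by (metis image_eqI)
qed

lemma tens_\<pi>_H_in_aff_rootsp_kdelta:
  assumes "h \<in> H"
  shows "tens k (\<pi> k h) \<in> aff_rootsp sc br B H \<sigma> \<omega> (kdelta H \<sigma> k)"
proof (rule tens_in_aff_rootsp[OF \<pi>_in_eigsp])
  fix f r s assume "(f, r, s) \<in> aff_H H \<sigma>"
  then have "br (f 0) (\<pi> k h) = 0"
    using assms H_abelian \<pi>_H by (simp add: mem_aff_H)
  with \<open>(f, r, s) \<in> aff_H H \<sigma>\<close> show "br (f 0) (\<pi> k h) + sc (s * of_int k) (\<pi> k h)
      = sc (kdelta H \<sigma> k (f, r, s)) (\<pi> k h)"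
    by (simp add: kdelta_def mult.commute)
qed

lemma aff_rootsp_kdelta:
  "k \<noteq> 0 \<Longrightarrow> aff_rootsp sc br B H \<sigma> \<omega> (kdelta H \<sigma> k) = tens k ` \<pi> k ` H"
  using aff_rootsp_kdelta_subset tens_\<pi>_H_in_aff_rootsp_kdelta by blast

lemma aff_core_zero: "0 \<in> core"
  by (simp add: aff_core_def flip: aff_zero_eq_0)

lemma aff_core_add: "X \<in> core \<Longrightarrow> Y \<in> core \<Longrightarrow> X + Y \<in> core"
  by (simp add: aff_core_def flip: aff_add_eq_plus)

lemma aff_core_scale: "X \<in> core \<Longrightarrow> aff_scale sc c X \<in> core"
  by (simp add: aff_core_def)

lemma aff_core_br: "X \<in> core \<Longrightarrow> Y \<in> core \<Longrightarrow> aff_br sc br B X Y \<in> core"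
  by (simp add: aff_core_def)

lemma aff_rootsp_subset_core:
  "\<phi> \<in> aff_nonisotropic_roots sc br B H \<sigma> \<omega> \<Longrightarrow> aff_rootsp sc br B H \<sigma> \<omega> \<phi> \<subseteq> core"
  by (auto simp: aff_core_def)

lemma aff_core_sum: "(\<And>a. a \<in> A \<Longrightarrow> f a \<in> core) \<Longrightarrow> sum f A \<in> core"
  by (induct A rule: infinite_finite_induct) (auto simp: aff_core_zero aff_core_add)

lemma aff_form_H_eqI:
  assumes T: "T \<in> aff_H H \<sigma>" "T' \<in> aff_H H \<sigma>"
    and eq: "\<And>Z. Z \<in> aff_H H \<sigma> \<Longrightarrow> aff_form B Z T = aff_form B Z T'"
  shows "T = T'"
proof -
  obtain f r s f' r' s' where T_eq: "T = (f, r, s)" "T' = (f', r', s')"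
    by (cases T, cases T')
  have H_0: "0 \<in> H"
    using vs.subspace_0[OF H_subspace] .
  have "s = s'"
    using eq[of "((\<lambda>_. 0), 1, 0)"] T H_0 by (simp add: T_eq mem_aff_H aff_form_H)
  moreover have "r = r'"
    using eq[of "((\<lambda>_. 0), 0, 1)"] T H_0 by (simp add: T_eq mem_aff_H aff_form_H)
  moreover have "f 0 = f' 0"
  proof -
    have "B h (f 0 - f' 0) = 0" if "h \<in> H\<^sub>\<sigma>" for h
      using eq[of "((\<lambda>n. if n = 0 then h else 0), 0, 0)"] that T
      by (simp add: T_eq mem_aff_H aff_form_H B_diff2)
    moreover have "f 0 - f' 0 \<in> H\<^sub>\<sigma>"
      using T vs.subspace_diff[OF H_subspace] by (auto simp: T_eq mem_aff_H \<sigma>_diff)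
    ultimately show ?thesis
      using B_fixed_nondegenerate by force
  qed
  moreover have "f n = f' n" for n
    using \<open>f 0 = f' 0\<close> T by (cases "n = 0") (auto simp: T_eq mem_aff_H)
  ultimately show ?thesis
    by (simp add: T_eq fun_eq_iff)
qed

definition aff_form_dual :: "'a aff \<Rightarrow> 'a aff \<Rightarrow> complex" where
  "aff_form_dual T Z = (if Z \<in> aff_H H \<sigma> then aff_form B Z T else 0)"

lemma aff_form_dual_in_aff_hdual: "aff_form_dual T \<in> aff_hdual sc H \<sigma>"
proof -
  obtain g p q where T: "T = (g, p, q)"
    by (cases T)
  show ?thesis
    unfolding aff_hdual_def
  proof (intro CollectI conjI ballI allI impI)
    fix Z Z' assume "Z \<in> aff_H H \<sigma>" "Z' \<in> aff_H H \<sigma>"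
    moreover from this have "aff_add Z Z' \<in> aff_H H \<sigma>"
      using vs.subspace_add[OF H_subspace] by (auto simp: aff_add_def mem_aff_H \<sigma>_add split: prod.splits)
    ultimately show "aff_form_dual T (aff_add Z Z') = aff_form_dual T Z + aff_form_dual T Z'"
      by (auto simp: T aff_form_dual_def aff_form_H aff_add_def B_add1 algebra_simps split: prod.splits)
  next
    fix c Z assume "Z \<in> aff_H H \<sigma>"
    moreover from this have "aff_scale sc c Z \<in> aff_H H \<sigma>"
      using vs.subspace_scale[OF H_subspace] by (auto simp: aff_scale_def mem_aff_H \<sigma>_scale split: prod.splits)
    ultimately show "aff_form_dual T (aff_scale sc c Z) = c * aff_form_dual T Z"
      by (auto simp: T aff_form_dual_def aff_form_H aff_scale_def B_sc1 algebra_simps split: prod.splits)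
  qed (simp add: aff_form_dual_def)
qed

lemma aff_tvec_aff_form_dual:
  assumes "T \<in> aff_H H \<sigma>"
  shows "aff_tvec B H \<sigma> (aff_form_dual T) = T"
  unfolding aff_tvec_def
proof (rule the_equality)
  show "T \<in> aff_H H \<sigma> \<and> (\<forall>Z\<in>aff_H H \<sigma>. aff_form_dual T Z = aff_form B Z T)"
    using assms by (simp add: aff_form_dual_def)
  show "T' = T" if "T' \<in> aff_H H \<sigma> \<and> (\<forall>Z\<in>aff_H H \<sigma>. aff_form_dual T Z = aff_form B Z T')" for T'
    using that assms by (intro aff_form_H_eqI) (auto simp: aff_form_dual_def)
qed

text \<open>x \<otimes> t^a is a root vector for \<beta> + a \<delta>, whose coroot t + a c is non-isotropic.\<close>

lemma tens_in_aff_core: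
  assumes t: "t \<in> H\<^sub>\<sigma>" "B t t \<noteq> 0"
    and x: "x \<in> eigsp sc \<sigma> \<omega> a" "x \<in> rootsp sc br H\<^sub>\<sigma> (\<lambda>h. B h t)"
  shows "tens a x \<in> core"
proof (cases "x = 0")
  case True
  then show ?thesis
    using aff_core_zero by simp
next
  case False
  define T :: "'a aff" where "T = ((\<lambda>n. if n = 0 then t else 0), of_int a, 0)"
  have T: "T \<in> aff_H H \<sigma>"
    using t(1) by (simp add: T_def mem_aff_H)
  have x_root: "tens a x \<in> aff_rootsp sc br B H \<sigma> \<omega> (aff_form_dual T)"
  proof (rule tens_in_aff_rootsp[OF x(1)])
    fix f r s assume "(f, r, s) \<in> aff_H H \<sigma>"
    then show "br (f 0) x + sc (s * of_int a) x = sc (aff_form_dual T (f, r, s)) x"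
      using rootspD[OF x(2)]
      by (simp add: mem_aff_H aff_form_dual_def aff_form_H T_def vs.scale_left_distrib mult.commute)
  qed
  moreover have "tens a x \<noteq> aff_zero"
    using False by (simp add: aff_zero_eq_0 tens_eq_0_iff)
  moreover have "aff_form B T T \<noteq> 0"
    using T t(2) by (simp add: aff_form_H T_def)
  ultimately have "aff_form_dual T \<in> aff_nonisotropic_roots sc br B H \<sigma> \<omega>"
    using aff_form_dual_in_aff_hdual aff_tvec_aff_form_dual[OF T]
    by (auto simp: aff_nonisotropic_roots_def aff_roots_def)
  then show ?thesis
    using x_root aff_rootsp_subset_core by blast
qed

definition core_loop_set :: "'a set" where
  "core_loop_set = {x. \<forall>a. a \<noteq> 0 \<longrightarrow> tens a (\<pi> a x) \<in> core}"

lemma core_loop_set_subalgebra: "subalgebra sc br core_loop_set"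
  unfolding subalgebra_def
proof
  show "vs.subspace core_loop_set"
    using \<pi>_scale[of _ 0 0] aff_core_zero
    by (auto simp: vs.subspace_def core_loop_set_def \<pi>_add \<pi>_scale tens_add
        aff_core_add aff_core_scale simp flip: aff_scale_tens)
  show "\<forall>x\<in>core_loop_set. \<forall>y\<in>core_loop_set. br x y \<in> core_loop_set"
  proof (intro ballI)
    fix x y assume xy: "x \<in> core_loop_set" "y \<in> core_loop_set"
    have "tens k (\<pi> k (br x y)) \<in> core" if "k \<noteq> 0" for k
    proof -
      text \<open>A window of m consecutive degrees that avoids both 0 and k.\<close>
      define W where "W = {\<bar>k\<bar> + 1..<\<bar>k\<bar> + 1 + int m}"
      have W: "a \<noteq> 0" "k - a \<noteq> 0" if "a \<in> W" for a
        using that by (auto simp: W_def)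
      have "tens k (\<pi> k (br x y)) = (\<Sum>a\<in>W. tens k (br (\<pi> a x) (\<pi> (k - a) y)))"
        unfolding W_def \<pi>_br_window_sum[where c = "\<bar>k\<bar> + 1" and k = k, symmetric] by (rule tens_sum)
      also have "\<dots> = (\<Sum>a\<in>W. aff_br sc br B (tens a (\<pi> a x)) (tens (k - a) (\<pi> (k - a) y)))"
        using \<open>k \<noteq> 0\<close> by (simp add: aff_br_tens)
      also have "\<dots> \<in> core"
        using xy W by (intro aff_core_sum aff_core_br) (auto simp: core_loop_set_def)
      finally show ?thesis .
    qed
    then show "br x y \<in> core_loop_set"
      by (simp add: core_loop_set_def)
  qed
qed

lemma nonzero_root_vectors_subset_core_loop_set:
  assumes fd: "fd_simple sc br"
  shows "nonzero_root_vectors \<subseteq> core_loop_set"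
proof
  fix x assume "x \<in> nonzero_root_vectors"
  then obtain \<beta> where \<beta>: "\<beta> \<in> hdual sc H" "\<exists>h\<in>H. \<beta> h \<noteq> 0" and x: "x \<in> rootsp sc br H \<beta>"
    by (auto simp: nonzero_root_vectors_def)
  have "tens a (\<pi> a x) \<in> core" for a
  proof (cases "\<pi> a x = 0")
    case True
    then show ?thesis
      using aff_core_zero by simp
  next
    case False
    then have "x \<noteq> 0"
      using \<pi>_scale[of a 0 0] by auto
    have x_a: "\<pi> a x \<in> rootsp sc br H\<^sub>\<sigma> \<beta>"
      using x by (auto intro: \<pi>_rootsp_fixed rootsp_mono)
    obtain h0 where "h0 \<in> H\<^sub>\<sigma>" "\<beta> h0 \<noteq> 0"
      using hdual_vanishing_on_fixed_eq_0[OF \<beta>(1) _ x \<open>x \<noteq> 0\<close>] \<beta>(2) by blast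
    then obtain t where t: "t \<in> H\<^sub>\<sigma>" "\<forall>h\<in>H\<^sub>\<sigma>. B h t = \<beta> h" "B t t \<noteq> 0"
      using exists_nonisotropic_coroot[OF fd \<pi>_in_eigsp x_a False] by blast
    then have "\<pi> a x \<in> rootsp sc br H\<^sub>\<sigma> (\<lambda>h. B h t)"
      using x_a rootsp_cong[of "H\<^sub>\<sigma>" \<beta> "\<lambda>h. B h t"] by simp
    then show ?thesis
      using tens_in_aff_core[OF t(1,3) \<pi>_in_eigsp] by blast
  qed
  then show "x \<in> core_loop_set"
    by (simp add: core_loop_set_def)
qed

lemma aff_rootsp_kdelta_subset_core:
  assumes "fd_simple sc br" and "k \<noteq> 0"
  shows "aff_rootsp sc br B H \<sigma> \<omega> (kdelta H \<sigma> k) \<subseteq> core"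
proof -
  have "core_loop_set = UNIV"
    using fd_simple_subalgebra_eq_UNIV[OF assms(1) core_loop_set_subalgebra]
      nonzero_root_vectors_subset_core_loop_set[OF assms(1)] by blast
  then have "tens k (\<pi> k x) \<in> core" for x
    using assms(2) unfolding core_loop_set_def by blast
  then show ?thesis
    using aff_rootsp_kdelta[OF assms(2)] by auto
qed

end

theorem lemma5p2:
  fixes sc :: "complex \<Rightarrow> 'a::ab_group_add \<Rightarrow> 'a"
    and br :: "'a \<Rightarrow> 'a \<Rightarrow> 'a"
    and B :: "'a \<Rightarrow> 'a \<Rightarrow> complex"
    and H :: "'a set"
    and \<sigma> :: "'a \<Rightarrow> 'a"
    and m :: nat
    and \<omega> :: complex
  assumes "eala sc br B H"
    and "admissible_aut sc br B H \<sigma> m"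
    and "primitive_root \<omega> m"
    and "\<exists>\<alpha>\<in>nonisotropic_roots sc br B H.
           dform B H (pi_dual \<sigma> m \<alpha>) (pi_dual \<sigma> m \<alpha>) \<noteq> 0"
    and "prime m"
  shows "(\<forall>k::int. k \<noteq> 0 \<longrightarrow>
            aff_rootsp sc br B H \<sigma> \<omega> (kdelta H \<sigma> k) = tens k ` (pi_k sc \<sigma> m \<omega> k ` H))
       \<and> (fd_simple sc br \<longrightarrow>
            (\<forall>k::int. k \<noteq> 0 \<longrightarrow>
               aff_rootsp sc br B H \<sigma> \<omega> (kdelta H \<sigma> k) \<subseteq> aff_core sc br B H \<sigma> \<omega>))"
proof -
  \<comment> \<open>The fourth hypothesis only serves to make the affinization an EALA; it is not used here.\<close>
  interpret twisted_eala sc br B H \<sigma> m \<omega>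
    using assms(1-3,5) by unfold_locales
  show ?thesis
    using aff_rootsp_kdelta aff_rootsp_kdelta_subset_core by blast
qed

end
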